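(* Let $v:\mathbb X\times\mathbb X\to[0,\infty]$ be a measurable symmetric pair potential and $z:\mathbb X\to[0,\infty)$ measurable. The following are equivalent: (i) $\tilde T_q^\circ(z)<\infty$ for all $q\in\mathbb X$; (ii) there exists a measurable function $a:\mathbb X\to[0,\infty)$ such that for all $x_0\in\mathbb X$, $$\sum_{k=1}^\infty\frac{1}{k!}\int_{\mathbb X^k}\prod_{j=1}^k|f(x_0,y_j)|\prod_{1\le i<j\le k}\bigl(1+f(y_i,y_j)\bigr)\prod_{j=1}^k z(y_j)e^{a(y_j)}\,d\lambda^k(\mathbf y)\le e^{a(x_0)}-1.$$
   Context: $(\mathbb X,\mathcal X)$ is a complete separable metric space with Borel $\sigma$-algebra, $\lambda$ a measure on it finite on bounded sets, $\lambda_z(dx)=z(x)\lambda(dx)$, $f(x,y)=e^{-v(x,y)}-1$ (with $e^{-\infty}=0$). For $n\in\mathbb N$, $\mathcal T_n^\circ$ is the set of (labelled) trees with vertex set $\{0,1,\dots,n\}$; each such tree is regarded as rooted at $0$, which defines for every vertex $k$ its set of children $C_k$. For $x_0,\dots,x_n\in\mathbb X$ set $$\tilde w(T;x_0,\dots,x_n)=\prod_{k=0}^n\Bigl(\prod_{i\in C_k}|f(x_k,x_i)|\prod_{i,j\in C_k,\,i<j}\bigl(1+f(x_i,x_j)\bigr)\Bigr),$$ and for $q\in\mathbb X$ $$\tilde T_q^\circ(z)=1+\sum_{n=1}^\infty\frac1{n!}\int_{\mathbb X^n}\sum_{T\in\mathcal T_n^\circ}\tilde w(T;q,x_1,\dots,x_n)\,d\lambda_z(x_1)\cdots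 d\lambda_z(x_n)\in[1,\infty].$$ *)

theory Defs
  imports "HOL-Analysis.Analysis" "HOL-Probability.Probability"
begin

definition expneg :: "ennreal \<Rightarrow> real" where
  "expneg t = (if t = \<top> then 0 else exp (- enn2real t))"

definition mayer :: "('a \<Rightarrow> 'a \<Rightarrow> ennreal) \<Rightarrow> 'a \<Rightarrow> 'a \<Rightarrow> real" where
  "mayer v x y = expneg (v x y) - 1"

text \<open>Graphs on {0..n} are given by their sets of (unordered) edges, each edge a 2-element set.\<close>
definition reach :: "nat set set \<Rightarrow> nat \<Rightarrow> nat \<Rightarrow> bool" where
  "reach E a b \<longleftrightarrow> (a, b) \<in> {(x, y). {x, y} \<in> E}\<^sup>*"

text \<open>Trees: connected, and acyclic (no edge lies on a cycle, i.e. removing any edge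
  disconnects its endpoints).\<close>
definition trees :: "nat \<Rightarrow> nat set set set" where
  "trees n = {E. (\<forall>e\<in>E. e \<subseteq> {0..n} \<and> card e = 2)
               \<and> (\<forall>i\<in>{0..n}. reach E 0 i)
               \<and> (\<forall>e\<in>E. \<forall>a b. e = {a, b} \<longrightarrow> \<not> reach (E - {e}) a b)}"

text \<open>Children of vertex k when the tree is rooted at 0: neighbours i of k such that
  after deleting the edge {k,i} the vertex k is still connected to the root 0.\<close>
definition children :: "nat set set \<Rightarrow> nat \<Rightarrow> nat set" where
  "children E k = {i. {k, i} \<in> E \<and> reach (E - {{k, i}}) 0 k}"

text \<open>Tree weight w~(T; x_0,...,x_n) (with values in [0,1], taken in ennreal)\<close>
definition tree_weight ::
  "('a \<Rightarrow> 'a \<Rightarrow> ennreal) \<Rightarrow> nat \<Rightarrow> nat set set \<Rightarrow> (nat \<Rightarrow> 'a) \<Rightarrow> ennreal" where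
  "tree_weight v n T x =
     (\<Prod>k\<in>{0..n}.
        (\<Prod>i\<in>children T k. ennreal \<bar>mayer v (x k) (x i)\<bar>) *
        (\<Prod>p\<in>{(i, j). i \<in> children T k \<and> j \<in> children T k \<and> i < j}.
            ennreal (1 + mayer v (x (fst p)) (x (snd p)))))"

definition Ttilde ::
  "'a measure \<Rightarrow> ('a \<Rightarrow> 'a \<Rightarrow> ennreal) \<Rightarrow> ('a \<Rightarrow> real) \<Rightarrow> 'a \<Rightarrow> ennreal" where
  "Ttilde lam v z q =
     1 + (\<Sum>m. let n = Suc m in
            ennreal (1 / fact n) *
            (\<integral>\<^sup>+ x. (\<Sum>T\<in>trees n. tree_weight v n T (x(0 := q)))
               \<partial>(PiM {1..n} (\<lambda>_. density lam (\<lambda>y. ennreal (z y))))))"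

definition cond_sum ::
  "'a measure \<Rightarrow> ('a \<Rightarrow> 'a \<Rightarrow> ennreal) \<Rightarrow> ('a \<Rightarrow> real) \<Rightarrow> ('a \<Rightarrow> real) \<Rightarrow> 'a \<Rightarrow> ennreal" where
  "cond_sum lam v z a x0 =
     (\<Sum>m. let k = Suc m in
        ennreal (1 / fact k) *
        (\<integral>\<^sup>+ y. (\<Prod>j\<in>{1..k}. ennreal \<bar>mayer v x0 (y j)\<bar>) *
                 (\<Prod>p\<in>{(i, j). i \<in> {1..k} \<and> j \<in> {1..k} \<and> i < j}.
                     ennreal (1 + mayer v (y (fst p)) (y (snd p)))) *
                 (\<Prod>j\<in>{1..k}. ennreal (z (y j) * exp (a (y j))))
           \<partial>(PiM {1..k} (\<lambda>_. lam))))"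

end

theory Submission
  imports Defs
begin

text \<open>Encode a labelled tree on \<open>{0..n}\<close> rooted at \<open>0\<close> by the map sending every other vertex to
  its parent. Cutting a tree at the root into the set of children of the root and the branches
  hanging from them, and averaging over the labellings of the children, turns the series defining
  \<open>T\<^sub>q(z)\<close> into the fixed-point equation \<open>T = 1 + \<Phi>(T)\<close>, where
  \<open>\<Phi>(G)(x\<^sub>0) = \<Sum>\<^sub>k 1/k! \<integral> \<Prod>|f(x\<^sub>0,y\<^sub>j)| \<Prod>(1 + f(y\<^sub>i,y\<^sub>j)) \<Prod>z(y\<^sub>j) G(y\<^sub>j) d\<lambda>\<^sup>k(y)\<close>;
  combinatorially this is the exponential formula. The truncations \<open>T\<^sub>N\<close> of the series satisfy
  \<open>T\<^sub>N\<^sub>+\<^sub>1 \<le> 1 + \<Phi>(T\<^sub>N)\<close>, so by monotonicity of \<open>\<Phi>\<close> every \<open>G\<close> with \<open>1 + \<Phi>(G) \<le> G\<close> dominates \<open>T\<close>.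
  Condition (ii) says precisely that \<open>G = e\<^sup>a\<close> is such a supersolution; conversely, if \<open>T\<close> is finite
  then \<open>a = log T\<close> satisfies (ii) with equality.\<close>

section \<open>Rooted trees as parent maps\<close>

definition parent_rel :: "(nat \<Rightarrow> nat) \<Rightarrow> nat set \<Rightarrow> (nat \<times> nat) set" where
  "parent_rel p V = {(i, p i) | i. i \<in> V}"

definition parent_maps :: "nat \<Rightarrow> nat set \<Rightarrow> (nat \<Rightarrow> nat) set" where
  "parent_maps r V = {p \<in> V \<rightarrow>\<^sub>E insert r V. \<forall>i\<in>V. (i, r) \<in> (parent_rel p V)\<^sup>*}"

definition fibre :: "'a set \<Rightarrow> ('a \<Rightarrow> 'b) \<Rightarrow> 'b \<Rightarrow> 'a set" where
  "fibre S \<pi> c = {j \<in> S. \<pi> j = c}"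

definition incr_pairs :: "nat set \<Rightarrow> (nat \<times> nat) set" where
  "incr_pairs S = {(i, j). i \<in> S \<and> j \<in> S \<and> i < j}"

definition star_weight :: "('a \<Rightarrow> 'a \<Rightarrow> ennreal) \<Rightarrow> ('a \<Rightarrow> 'a \<Rightarrow> ennreal) \<Rightarrow> 'a \<Rightarrow> nat set \<Rightarrow> (nat \<Rightarrow> 'a) \<Rightarrow> ennreal" where
  "star_weight A B y S x = (\<Prod>i\<in>S. A y (x i)) * (\<Prod>q\<in>incr_pairs S. B (x (fst q)) (x (snd q)))"

definition pmap_weight :: "('a \<Rightarrow> 'a \<Rightarrow> ennreal) \<Rightarrow> ('a \<Rightarrow> 'a \<Rightarrow> ennreal) \<Rightarrow> nat \<Rightarrow> nat set \<Rightarrow> (nat \<Rightarrow> nat) \<Rightarrow> (nat \<Rightarrow> 'a) \<Rightarrow> ennreal" where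
  "pmap_weight A B r V p x = (\<Prod>k\<in>insert r V. star_weight A B (x k) (fibre V p k) x)"

lemma parent_rel_iff: "(a, b) \<in> parent_rel p V \<longleftrightarrow> a \<in> V \<and> b = p a"
  by (auto simp: parent_rel_def)

lemma single_valued_parent_rel: "single_valued (parent_rel p V)"
  by (auto simp: single_valued_def parent_rel_def)

lemma parent_rel_rtrancl_outside: "(r, y) \<in> (parent_rel p V)\<^sup>* \<Longrightarrow> r \<notin> V \<Longrightarrow> y = r"
  by (erule converse_rtranclE) (auto simp: parent_rel_iff)

lemma parent_rel_cong: "(\<And>i. i \<in> V \<Longrightarrow> p i = q i) \<Longrightarrow> parent_rel p V = parent_rel q V"
  by (auto simp: parent_rel_def)

lemma parent_rel_mono: "V \<subseteq> W \<Longrightarrow> (\<And>i. i \<in> V \<Longrightarrow> p i = q i) \<Longrightarrow> parent_rel p V \<subseteq> parent_rel q W"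
  by (auto simp: parent_rel_def)

lemma finite_parent_maps: "finite V \<Longrightarrow> finite (parent_maps r V)"
  unfolding parent_maps_def by (rule finite_subset[of _ "V \<rightarrow>\<^sub>E insert r V"]) (auto intro: finite_PiE)

lemma parent_mapsD:
  assumes "p \<in> parent_maps r V"
  shows "\<And>i. i \<in> V \<Longrightarrow> p i \<in> insert r V" "\<And>i. i \<notin> V \<Longrightarrow> p i = undefined"
    "\<And>i. i \<in> V \<Longrightarrow> (i, r) \<in> (parent_rel p V)\<^sup>*"
  using assms by (auto simp: parent_maps_def PiE_def extensional_def)

lemma star_weight_cong:
  assumes "\<And>i. i \<in> S \<Longrightarrow> x i = x' i"
  shows "star_weight A B y S x = star_weight A B y S x'"
  using assms unfolding star_weight_def
  by (intro arg_cong2[where f="(*)"] prod.cong) (auto simp: incr_pairs_def)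

lemma pmap_weight_cong:
  assumes "\<And>i. i \<in> insert r V \<Longrightarrow> x i = x' i"
  shows "pmap_weight A B r V p x = pmap_weight A B r V p x'"
proof -
  have "star_weight A B (x k) (fibre V p k) x = star_weight A B (x' k) (fibre V p k) x'" if "k \<in> insert r V" for k
    using assms that unfolding star_weight_def
    by (intro arg_cong2[where f="(*)"] prod.cong) (auto simp: fibre_def incr_pairs_def)
  then show ?thesis by (simp add: pmap_weight_def)
qed

lemma parent_maps_empty: "parent_maps r {} = {\<lambda>_. undefined}"
  by (auto simp: parent_maps_def)

lemma pmap_weight_empty: "pmap_weight A B r {} p x = 1"
  by (simp add: pmap_weight_def star_weight_def fibre_def incr_pairs_def)

lemma rtrancl_parent_rel_from_root_child:
  assumes "r \<notin> V" "c \<in> V" "p c = r" "(c, y) \<in> (parent_rel p V)\<^sup>*"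
  shows "y = c \<or> y = r"
  using assms(4)
proof (cases rule: converse_rtranclE)
  case (step u)
  then show ?thesis using assms(1-3) parent_rel_rtrancl_outside by (auto simp: parent_rel_iff)
qed simp

lemma branch_root_unique:
  assumes "r \<notin> V" "c \<in> V" "p c = r" "c' \<in> V" "p c' = r"
    "(i, c) \<in> (parent_rel p V)\<^sup>*" "(i, c') \<in> (parent_rel p V)\<^sup>*"
  shows "c = c'"
proof -
  have "(c, c') \<in> (parent_rel p V)\<^sup>* \<or> (c', c) \<in> (parent_rel p V)\<^sup>*"
    using single_valued_confluent[OF single_valued_parent_rel] assms(6,7) by blast
  then show ?thesis
    using rtrancl_parent_rel_from_root_child[of r V c p] rtrancl_parent_rel_from_root_child[of r V c' p]
      assms(1-5) by fastforce
qed

lemma branch_root_exists: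
  assumes "(i, r) \<in> (parent_rel p V)\<^sup>*" "i \<noteq> r"
  shows "\<exists>c. c \<in> V \<and> p c = r \<and> (i, c) \<in> (parent_rel p V)\<^sup>*"
  using assms by (cases rule: rtranclE) (auto simp: parent_rel_iff)

definition branch_root :: "nat \<Rightarrow> nat set \<Rightarrow> (nat \<Rightarrow> nat) \<Rightarrow> nat \<Rightarrow> nat" where
  "branch_root r V p i = (THE c. c \<in> fibre V p r \<and> (i, c) \<in> (parent_rel p V)\<^sup>*)"

lemma branch_root_spec:
  assumes "p \<in> parent_maps r V" "r \<notin> V" "i \<in> V"
  shows "branch_root r V p i \<in> fibre V p r \<and> (i, branch_root r V p i) \<in> (parent_rel p V)\<^sup>*"
proof -
  have "(i, r) \<in> (parent_rel p V)\<^sup>*" using assms by (auto simp: parent_maps_def)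
  then obtain c where c: "c \<in> V" "p c = r" "(i, c) \<in> (parent_rel p V)\<^sup>*"
    using branch_root_exists assms by blast
  have "\<exists>!c. c \<in> fibre V p r \<and> (i, c) \<in> (parent_rel p V)\<^sup>*"
    using c branch_root_unique[OF assms(2)] by (auto simp: fibre_def)
  then show ?thesis unfolding branch_root_def by (rule theI')
qed

lemma branch_root_eq:
  assumes "p \<in> parent_maps r V" "r \<notin> V" "i \<in> V" "c \<in> fibre V p r" "(i, c) \<in> (parent_rel p V)\<^sup>*"
  shows "branch_root r V p i = c"
  using branch_root_spec[OF assms(1-3)] branch_root_unique[OF assms(2)] assms(4,5) by (auto simp: fibre_def)

text \<open>A parent map with root \<open>r\<close> is determined by the set \<open>C\<close> of children of the root, the map \<open>\<pi>\<close>
  sending every other vertex to the child of the root below which it lies, and the parent maps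
  \<open>ps c\<close> of the branches rooted at the children \<open>c \<in> C\<close>.\<close>

definition graft :: "nat set \<Rightarrow> nat \<Rightarrow> nat set \<Rightarrow> (nat \<Rightarrow> nat) \<Rightarrow> (nat \<Rightarrow> nat \<Rightarrow> nat) \<Rightarrow> nat \<Rightarrow> nat" where
  "graft V r C \<pi> ps = (\<lambda>i. if i \<in> C then r else if i \<in> V - C then ps (\<pi> i) i else undefined)"

definition branchings :: "nat \<Rightarrow> nat set \<Rightarrow> (nat set \<times> (nat \<Rightarrow> nat) \<times> (nat \<Rightarrow> nat \<Rightarrow> nat)) set" where
  "branchings r V = (SIGMA C:{C. C \<subseteq> V \<and> C \<noteq> {}}. SIGMA \<pi>:(V - C) \<rightarrow>\<^sub>E C. Pi\<^sub>E C (\<lambda>c. parent_maps c (fibre (V - C) \<pi> c)))"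

definition branch_split :: "nat \<Rightarrow> nat set \<Rightarrow> (nat \<Rightarrow> nat) \<Rightarrow> (nat set \<times> (nat \<Rightarrow> nat) \<times> (nat \<Rightarrow> nat \<Rightarrow> nat))" where
  "branch_split r V p = (let C = fibre V p r; \<pi> = restrict (branch_root r V p) (V - C) in
      (C, \<pi>, \<lambda>c\<in>C. restrict p (fibre (V - C) \<pi> c)))"

lemma graft_in_parent_maps:
  assumes rV: "r \<notin> V" and d: "(C, \<pi>, ps) \<in> branchings r V"
  shows "graft V r C \<pi> ps \<in> parent_maps r V"
proof -
  let ?g = "graft V r C \<pi> ps"
  have C: "C \<subseteq> V" and \<pi>: "\<pi> \<in> (V - C) \<rightarrow>\<^sub>E C"
    and ps: "\<And>c. c \<in> C \<Longrightarrow> ps c \<in> parent_maps c (fibre (V - C) \<pi> c)"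
    using d by (auto simp: branchings_def)
  have blkV: "fibre (V - C) \<pi> c \<subseteq> V" for c by (auto simp: fibre_def)
  have vals: "?g i \<in> insert r V" if "i \<in> V" for i
  proof (cases "i \<in> C")
    case False
    then have i: "i \<in> fibre (V - C) \<pi> (\<pi> i)" "\<pi> i \<in> C" using that \<pi> by (auto simp: fibre_def)
    have "ps (\<pi> i) i \<in> insert (\<pi> i) (fibre (V - C) \<pi> (\<pi> i))"
      using parent_mapsD(1)[OF ps[OF i(2)] i(1)] .
    then show ?thesis using False that C blkV i by (auto simp: graft_def)
  qed (auto simp: graft_def)
  have ext: "?g \<in> extensional V" using C by (auto simp: graft_def extensional_def)
  have reach: "(i, r) \<in> (parent_rel ?g V)\<^sup>*" if "i \<in> V" for i
  proof (cases "i \<in> C")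
    case True
    then have "(i, r) \<in> parent_rel ?g V" using that by (auto simp: parent_rel_iff graft_def)
    then show ?thesis by auto
  next
    case False
    let ?c = "\<pi> i" let ?B = "fibre (V - C) \<pi> (\<pi> i)"
    have i: "i \<in> ?B" "?c \<in> C" using that False \<pi> by (auto simp: fibre_def)
    have "(i, ?c) \<in> (parent_rel (ps ?c) ?B)\<^sup>*" using parent_mapsD(3)[OF ps[OF i(2)] i(1)] .
    moreover have "parent_rel (ps ?c) ?B \<subseteq> parent_rel ?g V"
      by (rule parent_rel_mono) (auto simp: fibre_def graft_def)
    ultimately have "(i, ?c) \<in> (parent_rel ?g V)\<^sup>*" using rtrancl_mono by blast
    moreover have "(?c, r) \<in> parent_rel ?g V" using i C by (auto simp: parent_rel_iff graft_def)
    ultimately show ?thesis by auto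
  qed
  show ?thesis using vals ext reach by (auto simp: parent_maps_def PiE_iff extensional_def)
qed

lemma fibre_graft_root:
  assumes rV: "r \<notin> V" and d: "(C, \<pi>, ps) \<in> branchings r V"
  shows "fibre V (graft V r C \<pi> ps) r = C"
proof -
  have C: "C \<subseteq> V" and \<pi>: "\<pi> \<in> (V - C) \<rightarrow>\<^sub>E C"
    and ps: "\<And>c. c \<in> C \<Longrightarrow> ps c \<in> parent_maps c (fibre (V - C) \<pi> c)"
    using d by (auto simp: branchings_def)
  have "graft V r C \<pi> ps i \<noteq> r" if "i \<in> V - C" for i
  proof -
    have i: "i \<in> fibre (V - C) \<pi> (\<pi> i)" "\<pi> i \<in> C" using that \<pi> by (auto simp: fibre_def)
    have "ps (\<pi> i) i \<in> insert (\<pi> i) (fibre (V - C) \<pi> (\<pi> i))"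
      using parent_mapsD(1)[OF ps[OF i(2)] i(1)] .
    then have "ps (\<pi> i) i \<in> V" using i C by (auto simp: fibre_def)
    then show ?thesis using that rV by (auto simp: graft_def)
  qed
  then show ?thesis using C by (auto simp: fibre_def graft_def)
qed

lemma parent_in_branch:
  assumes p: "p \<in> parent_maps r V" and rV: "r \<notin> V"
    and c: "c \<in> fibre V p r" and i: "i \<in> fibre (V - fibre V p r) (restrict (branch_root r V p) (V - fibre V p r)) c"
  shows "p i = c \<or> p i \<in> fibre (V - fibre V p r) (restrict (branch_root r V p) (V - fibre V p r)) c"
proof -
  let ?C = "fibre V p r"
  have iV: "i \<in> V" "i \<notin> ?C" and ai: "branch_root r V p i = c" using i by (auto simp: fibre_def)
  have ic: "(i, c) \<in> (parent_rel p V)\<^sup>*" using branch_root_spec[OF p rV iV(1)] ai by auto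
  have "i \<noteq> c" using iV c by auto
  then obtain y where y: "(i, y) \<in> parent_rel p V" "(y, c) \<in> (parent_rel p V)\<^sup>*"
    using ic by (metis converse_rtranclE)
  have yp: "y = p i" using y by (auto simp: parent_rel_iff)
  have cV: "c \<in> V" "p c = r" using c by (auto simp: fibre_def)
  have "y \<noteq> r"
  proof
    assume "y = r" then have "c = r" using parent_rel_rtrancl_outside y(2) rV by blast
    then show False using cV rV by auto
  qed
  then have yV: "y \<in> V" using parent_mapsD(1)[OF p iV(1)] yp by auto
  show ?thesis
  proof (cases "y = c")
    case False
    have "y \<notin> ?C"
    proof
      assume "y \<in> ?C"
      then have "y = c" using branch_root_unique[OF rV, of y p c y] y(2) cV by (auto simp: fibre_def)
      then show False using False by simp
    qed
    moreover have "branch_root r V p y = c" using branch_root_eq[OF p rV yV c y(2)] .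
    ultimately show ?thesis using yV yp by (auto simp: fibre_def)
  qed (use yp in auto)
qed

lemma branch_reaches_branch_root:
  assumes p: "p \<in> parent_maps r V" and rV: "r \<notin> V"
    and c: "c \<in> fibre V p r" and i: "i \<in> fibre (V - fibre V p r) (restrict (branch_root r V p) (V - fibre V p r)) c"
  shows "(i, c) \<in> (parent_rel p (fibre (V - fibre V p r) (restrict (branch_root r V p) (V - fibre V p r)) c))\<^sup>*"
proof -
  let ?B = "fibre (V - fibre V p r) (restrict (branch_root r V p) (V - fibre V p r)) c"
  have iV: "i \<in> V" and ai: "branch_root r V p i = c" using i by (auto simp: fibre_def)
  have ic: "(i, c) \<in> (parent_rel p V)\<^sup>*" using branch_root_spec[OF p rV iV] ai by auto
  have "j \<in> ?B \<longrightarrow> (j, c) \<in> (parent_rel p ?B)\<^sup>*" if "(j, c) \<in> (parent_rel p V)\<^sup>*" for j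
    using that
  proof (induction rule: converse_rtrancl_induct)
    case base
    then show ?case by auto
  next
    case (step j j')
    show ?case
    proof
      assume j: "j \<in> ?B"
      have jj: "j' = p j" using step(1) by (auto simp: parent_rel_iff)
      have e: "(j, j') \<in> parent_rel p ?B" using j jj by (auto simp: parent_rel_iff)
      from parent_in_branch[OF p rV c j] jj have "j' = c \<or> j' \<in> ?B" by simp
      then show "(j, c) \<in> (parent_rel p ?B)\<^sup>*"
      proof
        assume "j' = c" then show ?thesis using e by auto
      next
        assume "j' \<in> ?B"
        then have "(j', c) \<in> (parent_rel p ?B)\<^sup>*" using step(3) by blast
        then show ?thesis using e by (meson converse_rtrancl_into_rtrancl)
      qed
    qed
  qed
  then show ?thesis using ic i by auto
qed

lemma branch_split_in_branchings:
  assumes p: "p \<in> parent_maps r V" and rV: "r \<notin> V" and Vne: "V \<noteq> {}"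
  shows "branch_split r V p \<in> branchings r V"
proof -
  let ?C = "fibre V p r"
  let ?\<pi> = "restrict (branch_root r V p) (V - ?C)"
  have Cne: "?C \<noteq> {}"
  proof -
    obtain i where "i \<in> V" using Vne by auto
    then obtain c where "c \<in> V" "p c = r" using branch_root_exists parent_mapsD(3)[OF p] rV by blast
    then show ?thesis by (auto simp: fibre_def)
  qed
  have \<pi>: "?\<pi> \<in> (V - ?C) \<rightarrow>\<^sub>E ?C" using branch_root_spec[OF p rV] by auto
  have "restrict p (fibre (V - ?C) ?\<pi> c) \<in> parent_maps c (fibre (V - ?C) ?\<pi> c)" if c: "c \<in> ?C" for c
  proof -
    let ?B = "fibre (V - ?C) ?\<pi> c"
    have "parent_rel (restrict p ?B) ?B = parent_rel p ?B" by (rule parent_rel_cong) auto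
    then show ?thesis using parent_in_branch[OF p rV c] branch_reaches_branch_root[OF p rV c]
      by (auto simp: parent_maps_def PiE_iff)
  qed
  then show ?thesis using Cne \<pi> by (auto simp: branch_split_def branchings_def Let_def fibre_def)
qed

lemma graft_branch_split:
  assumes p: "p \<in> parent_maps r V" and rV: "r \<notin> V"
  shows "(case branch_split r V p of (C, \<pi>, ps) \<Rightarrow> graft V r C \<pi> ps) = p"
proof -
  let ?C = "fibre V p r"
  let ?\<pi> = "restrict (branch_root r V p) (V - ?C)"
  have "graft V r ?C ?\<pi> (\<lambda>c\<in>?C. restrict p (fibre (V - ?C) ?\<pi> c)) i = p i" for i
  proof -
    { assume i: "i \<in> V - ?C"
      then have "branch_root r V p i \<in> ?C" using branch_root_spec[OF p rV] by auto
      then have ?thesis using i by (auto simp: graft_def fibre_def) }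
    then show ?thesis using parent_mapsD(2)[OF p] by (auto simp: graft_def fibre_def)
  qed
  then show ?thesis by (auto simp: branch_split_def Let_def)
qed

lemma branch_split_graft:
  assumes rV: "r \<notin> V" and d: "(C, \<pi>, ps) \<in> branchings r V"
  shows "branch_split r V (graft V r C \<pi> ps) = (C, \<pi>, ps)"
proof -
  let ?g = "graft V r C \<pi> ps"
  have C: "C \<subseteq> V" and \<pi>: "\<pi> \<in> (V - C) \<rightarrow>\<^sub>E C"
    and ps: "\<And>c. c \<in> C \<Longrightarrow> ps c \<in> parent_maps c (fibre (V - C) \<pi> c)"
    using d by (auto simp: branchings_def)
  have gp: "?g \<in> parent_maps r V" by (rule graft_in_parent_maps[OF rV d])
  have fg: "fibre V ?g r = C" by (rule fibre_graft_root[OF rV d])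
  have branch_root: "branch_root r V ?g i = \<pi> i" if i: "i \<in> V - C" for i
  proof -
    let ?c = "\<pi> i" let ?B = "fibre (V - C) \<pi> (\<pi> i)"
    have i': "i \<in> ?B" "?c \<in> C" using i \<pi> by (auto simp: fibre_def)
    have "(i, ?c) \<in> (parent_rel (ps ?c) ?B)\<^sup>*" using parent_mapsD(3)[OF ps[OF i'(2)] i'(1)] .
    moreover have "parent_rel (ps ?c) ?B \<subseteq> parent_rel ?g V"
      by (rule parent_rel_mono) (auto simp: fibre_def graft_def)
    ultimately have "(i, ?c) \<in> (parent_rel ?g V)\<^sup>*" using rtrancl_mono by blast
    then show ?thesis using branch_root_eq[OF gp rV, of i ?c] i i'(2) fg by auto
  qed
  have pie: "restrict (branch_root r V ?g) (V - C) = \<pi>"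
    using branch_root \<pi> by (auto simp: PiE_iff extensional_def)
  have "(\<lambda>c\<in>C. restrict ?g (fibre (V - C) \<pi> c)) = ps"
  proof
    fix c show "(\<lambda>c\<in>C. restrict ?g (fibre (V - C) \<pi> c)) c = ps c"
    proof (cases "c \<in> C")
      case True
      have "restrict ?g (fibre (V - C) \<pi> c) = ps c"
      proof
        fix j show "restrict ?g (fibre (V - C) \<pi> c) j = ps c j"
          using parent_mapsD(2)[OF ps[OF True]] by (auto simp: graft_def fibre_def)
      qed
      then show ?thesis using True by simp
    next
      case False then show ?thesis using d by (auto simp: branchings_def PiE_iff extensional_def)
    qed
  qed
  then show ?thesis using fg pie by (simp add: branch_split_def Let_def)
qed

lemma bij_betw_graft:
  assumes rV: "r \<notin> V" and Vne: "V \<noteq> {}"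
  shows "bij_betw (\<lambda>(C, \<pi>, ps). graft V r C \<pi> ps) (branchings r V) (parent_maps r V)"
proof (rule bij_betwI[where g = "branch_split r V"])
  show "(\<lambda>(C, \<pi>, ps). graft V r C \<pi> ps) \<in> branchings r V \<rightarrow> parent_maps r V"
    using graft_in_parent_maps[OF rV] by auto
  show "branch_split r V \<in> parent_maps r V \<rightarrow> branchings r V"
    using branch_split_in_branchings[OF _ rV Vne] by auto
  show "branch_split r V (case x of (C, \<pi>, ps) \<Rightarrow> graft V r C \<pi> ps) = x" if "x \<in> branchings r V" for x
    using branch_split_graft[OF rV] that by (cases x) auto
  show "(case branch_split r V y of (C, \<pi>, ps) \<Rightarrow> graft V r C \<pi> ps) = y" if "y \<in> parent_maps r V" for y
    using graft_branch_split[OF that rV] .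
qed

lemma fibre_graft:
  assumes rV: "r \<notin> V" and d: "(C, \<pi>, ps) \<in> branchings r V"
    and c: "c \<in> C" and k: "k \<in> insert c (fibre (V - C) \<pi> c)"
  shows "fibre V (graft V r C \<pi> ps) k = fibre (fibre (V - C) \<pi> c) (ps c) k"
proof
  let ?g = "graft V r C \<pi> ps"
  let ?B = "fibre (V - C) \<pi>"
  have C: "C \<subseteq> V" and \<pi>: "\<pi> \<in> (V - C) \<rightarrow>\<^sub>E C"
    and ps: "\<And>c. c \<in> C \<Longrightarrow> ps c \<in> parent_maps c (?B c)"
    using d by (auto simp: branchings_def)
  show "fibre V ?g k \<subseteq> fibre (?B c) (ps c) k"
  proof
    fix i assume i: "i \<in> fibre V ?g k"
    then have iV: "i \<in> V" and gi: "?g i = k" by (auto simp: fibre_def)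
    have "k \<in> V" using k c C by (auto simp: fibre_def)
    then have iC: "i \<notin> C" using gi rV by (auto simp: graft_def)
    then have i': "i \<in> ?B (\<pi> i)" "\<pi> i \<in> C" using iV \<pi> by (auto simp: fibre_def)
    have gi': "?g i = ps (\<pi> i) i" using iC iV by (auto simp: graft_def)
    have "k \<in> insert (\<pi> i) (?B (\<pi> i))"
      using parent_mapsD(1)[OF ps[OF i'(2)] i'(1)] gi gi' by simp
    then have "\<pi> i = c" using k c i'(2) by (auto simp: fibre_def)
    then show "i \<in> fibre (?B c) (ps c) k" using i' gi gi' by (auto simp: fibre_def)
  qed
  show "fibre (?B c) (ps c) k \<subseteq> fibre V ?g k"
    using c by (auto simp: fibre_def graft_def)
qed

lemma pmap_weight_graft:
  assumes rV: "r \<notin> V" and fin: "finite V" and d: "(C, \<pi>, ps) \<in> branchings r V"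
  shows "pmap_weight A B r V (graft V r C \<pi> ps) x =
     star_weight A B (x r) C x * (\<Prod>c\<in>C. pmap_weight A B c (fibre (V - C) \<pi> c) (ps c) x)"
proof -
  let ?g = "graft V r C \<pi> ps"
  let ?B = "fibre (V - C) \<pi>"
  have C: "C \<subseteq> V" and \<pi>: "\<pi> \<in> (V - C) \<rightarrow>\<^sub>E C"
    using d by (auto simp: branchings_def)
  have finC: "finite C" using C fin finite_subset by blast
  have finB: "finite (?B c)" for c using fin by (auto simp: fibre_def)
  have Vdec: "V = (\<Union>c\<in>C. insert c (?B c))"
    using C \<pi> by (auto simp: fibre_def)
  have disj: "insert c (?B c) \<inter> insert c' (?B c') = {}" if "c \<in> C" "c' \<in> C" "c \<noteq> c'" for c c'
    using that by (auto simp: fibre_def)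
  have "r \<notin> (\<Union>c\<in>C. insert c (?B c))" using rV Vdec by blast
  then have "pmap_weight A B r V ?g x = star_weight A B (x r) (fibre V ?g r) x *
      (\<Prod>k\<in>(\<Union>c\<in>C. insert c (?B c)). star_weight A B (x k) (fibre V ?g k) x)"
    unfolding pmap_weight_def using finB finC by (subst Vdec, subst prod.insert) auto
  also have "(\<Prod>k\<in>(\<Union>c\<in>C. insert c (?B c)). star_weight A B (x k) (fibre V ?g k) x) =
      (\<Prod>c\<in>C. \<Prod>k\<in>insert c (?B c). star_weight A B (x k) (fibre V ?g k) x)"
    by (rule prod.UNION_disjoint) (use finC finB disj in auto)
  also have "\<dots> = (\<Prod>c\<in>C. pmap_weight A B c (?B c) (ps c) x)"
    unfolding pmap_weight_def by (intro prod.cong refl) (simp add: fibre_graft[OF rV d])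
  finally show ?thesis using fibre_graft_root[OF rV d] by simp
qed

lemma sum_pmap_weight_branchings:
  assumes rV: "r \<notin> V" and fin: "finite V" and Vne: "V \<noteq> {}"
  shows "(\<Sum>p\<in>parent_maps r V. pmap_weight A B r V p x) =
    (\<Sum>C\<in>{C. C \<subseteq> V \<and> C \<noteq> {}}. \<Sum>\<pi>\<in>(V - C) \<rightarrow>\<^sub>E C.
       star_weight A B (x r) C x * (\<Prod>c\<in>C. \<Sum>q\<in>parent_maps c (fibre (V - C) \<pi> c). pmap_weight A B c (fibre (V - C) \<pi> c) q x))"
proof -
  let ?B = "\<lambda>C \<pi>. fibre (V - C) \<pi>"
  have finB: "finite (?B C \<pi> c)" for C \<pi> c using fin by (auto simp: fibre_def)
  have finCs: "finite {C. C \<subseteq> V \<and> C \<noteq> {}}" using fin by (auto intro: finite_subset[of _ "Pow V"])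
  have finPi: "finite ((V - C) \<rightarrow>\<^sub>E C)" if "C \<subseteq> V" for C using fin that by (auto intro: finite_PiE finite_subset)
  have finPS: "finite (Pi\<^sub>E C (\<lambda>c. parent_maps c (?B C \<pi> c)))" if "C \<subseteq> V" for C \<pi>
    using fin that by (auto intro!: finite_PiE finite_parent_maps finB intro: finite_subset)
  have "(\<Sum>p\<in>parent_maps r V. pmap_weight A B r V p x) = (\<Sum>(C, \<pi>, ps)\<in>branchings r V. pmap_weight A B r V (graft V r C \<pi> ps) x)"
    using sum.reindex_bij_betw[OF bij_betw_graft[OF rV Vne], of "\<lambda>p. pmap_weight A B r V p x"]
    by (simp add: case_prod_unfold)
  also have "\<dots> = (\<Sum>(C, \<pi>, ps)\<in>branchings r V. star_weight A B (x r) C x * (\<Prod>c\<in>C. pmap_weight A B c (?B C \<pi> c) (ps c) x))"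
    by (rule sum.cong[OF refl]) (auto simp: pmap_weight_graft[OF rV fin])
  also have "\<dots> = (\<Sum>C\<in>{C. C \<subseteq> V \<and> C \<noteq> {}}. \<Sum>\<pi>\<in>(V - C) \<rightarrow>\<^sub>E C. \<Sum>ps\<in>Pi\<^sub>E C (\<lambda>c. parent_maps c (?B C \<pi> c)).
        star_weight A B (x r) C x * (\<Prod>c\<in>C. pmap_weight A B c (?B C \<pi> c) (ps c) x))"
    unfolding branchings_def using finCs finPi finPS by (simp add: sum.Sigma)
  also have "\<dots> = (\<Sum>C\<in>{C. C \<subseteq> V \<and> C \<noteq> {}}. \<Sum>\<pi>\<in>(V - C) \<rightarrow>\<^sub>E C.
       star_weight A B (x r) C x * (\<Prod>c\<in>C. \<Sum>q\<in>parent_maps c (?B C \<pi> c). pmap_weight A B c (?B C \<pi> c) q x))"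
    using finite_subset[OF _ fin]
    by (intro sum.cong refl) (auto simp: prod_sum_PiE sum_distrib_left finite_parent_maps finB)
  finally show ?thesis .
qed

section \<open>Relabelling parent maps\<close>

lemma bij_betw_incr_pairs_image:
  assumes inj: "inj_on h S"
  shows "bij_betw (\<lambda>(i, j). if h i < h j then (h i, h j) else (h j, h i)) (incr_pairs S) (incr_pairs (h ` S))"
  (is "bij_betw ?\<tau> _ _")
proof (rule bij_betw_imageI)
  show "inj_on ?\<tau> (incr_pairs S)"
  proof (rule inj_onI)
    fix a b assume a: "a \<in> incr_pairs S" and b: "b \<in> incr_pairs S" and e: "?\<tau> a = ?\<tau> b"
    obtain i j where ij: "a = (i, j)" "i \<in> S" "j \<in> S" "i < j" using a by (auto simp: incr_pairs_def)
    obtain i' j' where ij': "b = (i', j')" "i' \<in> S" "j' \<in> S" "i' < j'" using b by (auto simp: incr_pairs_def)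
    have "{h i, h j} = {h i', h j'}" using e ij ij' by (auto split: if_splits)
    then have "(h i = h i' \<and> h j = h j') \<or> (h i = h j' \<and> h j = h i')"
      by (simp add: doubleton_eq_iff)
    then have "(i = i' \<and> j = j') \<or> (i = j' \<and> j = i')"
      using ij ij' by (simp add: inj_on_eq_iff[OF inj])
    then show "a = b" using ij ij' by auto
  qed
  show "?\<tau> ` incr_pairs S = incr_pairs (h ` S)"
  proof
    show "?\<tau> ` incr_pairs S \<subseteq> incr_pairs (h ` S)"
    proof
      fix q assume "q \<in> ?\<tau> ` incr_pairs S"
      then obtain i j where ij: "q = ?\<tau> (i, j)" "i \<in> S" "j \<in> S" "i < j" by (auto simp: incr_pairs_def)
      have "h i \<noteq> h j" using inj ij unfolding inj_on_def by auto
      then show "q \<in> incr_pairs (h ` S)" using ij by (auto simp: incr_pairs_def)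
    qed
    show "incr_pairs (h ` S) \<subseteq> ?\<tau> ` incr_pairs S"
    proof
      fix q assume "q \<in> incr_pairs (h ` S)"
      then obtain i j where ij: "q = (h i, h j)" "i \<in> S" "j \<in> S" "h i < h j" by (auto simp: incr_pairs_def)
      then have "i \<noteq> j" by auto
      then consider "i < j" | "j < i" by linarith
      then show "q \<in> ?\<tau> ` incr_pairs S"
      proof cases
        case 1 then show ?thesis using ij by (auto simp: incr_pairs_def intro!: image_eqI[of _ _ "(i, j)"])
      next
        case 2 then show ?thesis using ij by (auto simp: incr_pairs_def intro!: image_eqI[of _ _ "(j, i)"])
      qed
    qed
  qed
qed

lemma prod_incr_pairs_image:
  assumes inj: "inj_on h S" and sym: "\<And>a b. g a b = g b a"
  shows "(\<Prod>q\<in>incr_pairs (h ` S). g (fst q) (snd q)) = (\<Prod>q\<in>incr_pairs S. g (h (fst q)) (h (snd q)))"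
proof -
  have "(\<Prod>q\<in>incr_pairs (h ` S). g (fst q) (snd q))
      = (\<Prod>q\<in>incr_pairs S. g (fst (if h (fst q) < h (snd q) then (h (fst q), h (snd q)) else (h (snd q), h (fst q))))
                              (snd (if h (fst q) < h (snd q) then (h (fst q), h (snd q)) else (h (snd q), h (fst q)))))"
    using prod.reindex_bij_betw[OF bij_betw_incr_pairs_image[OF inj], of "\<lambda>q. g (fst q) (snd q)"]
    by (simp add: case_prod_beta)
  also have "\<dots> = (\<Prod>q\<in>incr_pairs S. g (h (fst q)) (h (snd q)))"
    using sym by (intro prod.cong) auto
  finally show ?thesis .
qed

lemma star_weight_image:
  assumes inj: "inj_on h S" and sym: "\<And>a b. B a b = B b a"
  shows "star_weight A B y (h ` S) x = star_weight A B y S (x \<circ> h)"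
  unfolding star_weight_def
  using prod_incr_pairs_image[OF inj, of "\<lambda>a b. B (x a) (x b)"] sym prod.reindex[OF inj, of "\<lambda>i. A y (x i)"]
  by simp

definition relabel_pmap :: "(nat \<Rightarrow> nat) \<Rightarrow> (nat \<Rightarrow> nat) \<Rightarrow> nat set \<Rightarrow> (nat \<Rightarrow> nat) \<Rightarrow> nat \<Rightarrow> nat" where
  "relabel_pmap h g V' p = (\<lambda>i'\<in>V'. h (p (g i')))"

locale pmap_relabelling =
  fixes h g :: "nat \<Rightarrow> nat" and r r' :: nat and V V' :: "nat set"
  assumes rV: "r \<notin> V" and rV': "r' \<notin> V'" and hr: "h r = r'" and gr: "g r' = r"
    and hV: "h ` V = V'" and gV: "g ` V' = V"
    and gh: "\<And>i. i \<in> insert r V \<Longrightarrow> g (h i) = i" and hg: "\<And>i. i \<in> insert r' V' \<Longrightarrow> h (g i) = i"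
begin

lemma h_inj: "inj_on h (insert r V)"
  by (metis gh inj_on_inverseI)

lemma relabel_pmap_in_parent_maps: "p \<in> parent_maps r V \<Longrightarrow> relabel_pmap h g V' p \<in> parent_maps r' V'"
proof -
  assume p: "p \<in> parent_maps r V"
  let ?p' = "relabel_pmap h g V' p"
  have gi: "g i' \<in> V" if "i' \<in> V'" for i' using that gV by auto
  have vals: "?p' i' \<in> insert r' V'" if "i' \<in> V'" for i'
    using parent_mapsD(1)[OF p gi[OF that]] that hV hr by (auto simp: relabel_pmap_def)
  have "(h a, h b) \<in> (parent_rel ?p' V')\<^sup>*" if "(a, b) \<in> (parent_rel p V)\<^sup>*" for a b
    using that
  proof (induction rule: rtrancl_induct)
    case (step b c)
    then have b: "b \<in> V" "c = p b" by (auto simp: parent_rel_iff)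
    have "(h b, h c) \<in> parent_rel ?p' V'" using b hV gh by (auto simp: parent_rel_iff relabel_pmap_def)
    then show ?case using step(3) by auto
  qed auto
  then have "(i', r') \<in> (parent_rel ?p' V')\<^sup>*" if "i' \<in> V'" for i'
    using parent_mapsD(3)[OF p gi[OF that]] hg that hr by fastforce
  then show ?thesis using vals by (auto simp: parent_maps_def relabel_pmap_def)
qed

lemma fibre_relabel_pmap:
  assumes p: "p \<in> parent_maps r V" and k: "k \<in> insert r V"
  shows "fibre V' (relabel_pmap h g V' p) (h k) = h ` fibre V p k"
proof
  show "fibre V' (relabel_pmap h g V' p) (h k) \<subseteq> h ` fibre V p k"
  proof
    fix i' assume "i' \<in> fibre V' (relabel_pmap h g V' p) (h k)"
    then have i': "i' \<in> V'" "h (p (g i')) = h k" by (auto simp: fibre_def relabel_pmap_def)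
    have giV: "g i' \<in> V" using i' gV by auto
    have "p (g i') = k" using h_inj i' parent_mapsD(1)[OF p giV] k unfolding inj_on_def by auto
    moreover have "i' = h (g i')" using hg i' by auto
    ultimately show "i' \<in> h ` fibre V p k" using giV by (auto simp: fibre_def)
  qed
  show "h ` fibre V p k \<subseteq> fibre V' (relabel_pmap h g V' p) (h k)"
  proof
    fix i' assume "i' \<in> h ` fibre V p k"
    then obtain i where i: "i \<in> V" "p i = k" "i' = h i" by (auto simp: fibre_def)
    have "g (h i) = i" using gh i(1) by auto
    then show "i' \<in> fibre V' (relabel_pmap h g V' p) (h k)"
      using i hV by (auto simp: fibre_def relabel_pmap_def)
  qed
qed

lemma pmap_weight_relabel_pmap:
  assumes p: "p \<in> parent_maps r V" and sym: "\<And>a b. B a b = B b a"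
  shows "pmap_weight A B r' V' (relabel_pmap h g V' p) x = pmap_weight A B r V p (x \<circ> h)"
proof -
  have img: "h ` insert r V = insert r' V'" using hV hr by auto
  have "pmap_weight A B r' V' (relabel_pmap h g V' p) x = (\<Prod>k\<in>insert r V. star_weight A B (x (h k)) (fibre V' (relabel_pmap h g V' p) (h k)) x)"
    unfolding pmap_weight_def by (subst img[symmetric], subst prod.reindex[OF h_inj]) simp
  also have "\<dots> = (\<Prod>k\<in>insert r V. star_weight A B (x (h k)) (fibre V p k) (x \<circ> h))"
  proof (rule prod.cong[OF refl])
    fix k assume k: "k \<in> insert r V"
    have "inj_on h (fibre V p k)" using h_inj by (rule inj_on_subset) (auto simp: fibre_def)
    then show "star_weight A B (x (h k)) (fibre V' (relabel_pmap h g V' p) (h k)) x = star_weight A B (x (h k)) (fibre V p k) (x \<circ> h)"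
      using fibre_relabel_pmap[OF p k] star_weight_image sym by metis
  qed
  also have "\<dots> = pmap_weight A B r V p (x \<circ> h)" by (simp add: pmap_weight_def)
  finally show ?thesis .
qed

lemma relabel_pmap_relabel_pmap:
  assumes p: "p \<in> parent_maps r V"
  shows "relabel_pmap g h V (relabel_pmap h g V' p) = p"
proof
  fix i show "relabel_pmap g h V (relabel_pmap h g V' p) i = p i"
  proof (cases "i \<in> V")
    case True
    then have "h i \<in> V'" "p i \<in> insert r V" using hV parent_mapsD(1)[OF p] by auto
    then show ?thesis using True gh by (simp add: relabel_pmap_def)
  qed (simp add: relabel_pmap_def parent_mapsD(2)[OF p])
qed

end

lemma pmap_relabelling_sym: "pmap_relabelling h g r r' V V' \<Longrightarrow> pmap_relabelling g h r' r V' V"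
  unfolding pmap_relabelling_def by auto

lemma bij_betw_relabel_pmap:
  assumes "pmap_relabelling h g r r' V V'"
  shows "bij_betw (relabel_pmap h g V') (parent_maps r V) (parent_maps r' V')"
proof (rule bij_betwI[where g = "relabel_pmap g h V"])
  interpret R: pmap_relabelling h g r r' V V' by fact
  interpret S: pmap_relabelling g h r' r V' V by (rule pmap_relabelling_sym) fact
  show "relabel_pmap h g V' \<in> parent_maps r V \<rightarrow> parent_maps r' V'" using R.relabel_pmap_in_parent_maps by auto
  show "relabel_pmap g h V \<in> parent_maps r' V' \<rightarrow> parent_maps r V" using S.relabel_pmap_in_parent_maps by auto
  show "relabel_pmap g h V (relabel_pmap h g V' p) = p" if "p \<in> parent_maps r V" for p
    using R.relabel_pmap_relabel_pmap that .
  show "relabel_pmap h g V' (relabel_pmap g h V p) = p" if "p \<in> parent_maps r' V'" for p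
    using S.relabel_pmap_relabel_pmap that .
qed

lemma pmap_relabelling_bij_betw:
  assumes e: "bij_betw e V' V" and r: "r \<notin> V" and r': "r' \<notin> V'"
  shows "pmap_relabelling (\<lambda>j. if j = r then r' else the_inv_into V' e j) (\<lambda>i. if i = r' then r else e i) r r' V V'"
proof -
  let ?h = "\<lambda>j. if j = r then r' else the_inv_into V' e j"
  let ?g = "\<lambda>i. if i = r' then r else e i"
  have inj: "inj_on e V'" and img: "e ` V' = V" using e by (auto simp: bij_betw_def)
  have inv: "the_inv_into V' e j \<in> V'" "e (the_inv_into V' e j) = j" if "j \<in> V" for j
    using the_inv_into_into[OF inj _ order_refl] f_the_inv_into_f[OF inj] that img by auto
  have inv': "the_inv_into V' e (e i) = i" "e i \<in> V" if "i \<in> V'" for i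
    using the_inv_into_f_f[OF inj that] that img by auto
  show ?thesis
  proof (rule pmap_relabelling.intro)
    have "?h ` V = the_inv_into V' e ` V" using r by (intro image_cong) auto
    then show "?h ` V = V'" using bij_betw_the_inv_into[OF e] by (simp add: bij_betw_def)
    have "?g ` V' = e ` V'" using r' by (intro image_cong) auto
    then show "?g ` V' = V" using img by simp
    show "?g (?h i) = i" if "i \<in> insert r V" for i
      using that inv r' by (cases "i = r") auto
    show "?h (?g i) = i" if "i \<in> insert r' V'" for i
      using that inv' r by (cases "i = r'") auto
    show "r \<notin> V" "r' \<notin> V'" "?h r = r'" "?g r' = r" using r r' by simp_all
  qed
qed

lemma sum_pmap_weight_relabel:
  assumes R: "pmap_relabelling h g r r' V V'" and sym: "\<And>a b. B a b = B b a"
  shows "(\<Sum>p\<in>parent_maps r' V'. pmap_weight A B r' V' p x) = (\<Sum>p\<in>parent_maps r V. pmap_weight A B r V p (x \<circ> h))"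
proof -
  interpret R: pmap_relabelling h g r r' V V' by fact
  have "(\<Sum>p\<in>parent_maps r' V'. pmap_weight A B r' V' p x) = (\<Sum>p\<in>parent_maps r V. pmap_weight A B r' V' (relabel_pmap h g V' p) x)"
    using sum.reindex_bij_betw[OF bij_betw_relabel_pmap[OF R], of "\<lambda>p. pmap_weight A B r' V' p x"] by simp
  also have "\<dots> = (\<Sum>p\<in>parent_maps r V. pmap_weight A B r V p (x \<circ> h))"
    by (rule sum.cong[OF refl]) (rule R.pmap_weight_relabel_pmap[OF _ sym])
  finally show ?thesis .
qed


section \<open>Labelled trees and parent maps\<close>

definition edge_rel :: "nat set set \<Rightarrow> (nat \<times> nat) set" where
  "edge_rel E = {(x, y). {x, y} \<in> E}"

lemma reach_edge_rel: "reach E a b \<longleftrightarrow> (a, b) \<in> (edge_rel E)\<^sup>*"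
  by (simp add: reach_def edge_rel_def)

lemma edge_rel_sym: "(a, b) \<in> edge_rel E \<Longrightarrow> (b, a) \<in> edge_rel E"
  by (auto simp: edge_rel_def insert_commute)

lemma reach_sym: "reach E a b \<Longrightarrow> reach E b a"
proof -
  have "sym (edge_rel E)" using edge_rel_sym by (auto intro: symI)
  then have "sym ((edge_rel E)\<^sup>*)" by (rule sym_rtrancl)
  then show "reach E a b \<Longrightarrow> reach E b a" by (auto simp: reach_edge_rel dest: symD)
qed

lemma reach_trans: "reach E a b \<Longrightarrow> reach E b c \<Longrightarrow> reach E a c"
  by (simp add: reach_edge_rel)

lemma reach_refl: "reach E a a"
  by (simp add: reach_edge_rel)

lemma reach_edge: "{a, b} \<in> E \<Longrightarrow> reach E a b"
  by (auto simp: reach_edge_rel edge_rel_def)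

lemma reach_mono: "E \<subseteq> E' \<Longrightarrow> reach E a b \<Longrightarrow> reach E' a b"
proof -
  assume "E \<subseteq> E'"
  then have "edge_rel E \<subseteq> edge_rel E'" by (auto simp: edge_rel_def)
  then show "reach E a b \<Longrightarrow> reach E' a b" by (auto simp: reach_edge_rel dest: rtrancl_mono)
qed

lemma reach_remove_edge:
  assumes "reach E a b"
  shows "reach (E - {e}) a b \<or> (\<exists>x\<in>e. reach (E - {e}) a x)"
  using assms unfolding reach_edge_rel
proof (induction rule: rtrancl_induct)
  case base then show ?case by auto
next
  case (step y z)
  show ?case
  proof (cases "{y, z} = e")
    case True
    then show ?thesis using step(3) by (auto simp: reach_edge_rel)
  next
    case False
    then have "(y, z) \<in> edge_rel (E - {e})" using step(2) by (auto simp: edge_rel_def)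
    then show ?thesis using step(3) by (auto simp: reach_edge_rel)
  qed
qed

lemma reach_remove_edge_relpow:
  assumes "(a, b) \<in> (edge_rel E) ^^ m"
  shows "reach (E - {e}) a b \<or> (\<forall>y\<in>e. \<exists>j\<le>m. (a, y) \<in> (edge_rel E) ^^ j)"
  using assms
proof (induction m arbitrary: b)
  case 0 then show ?case by (auto simp: reach_refl)
next
  case (Suc m)
  then obtain c where c: "(a, c) \<in> (edge_rel E) ^^ m" "(c, b) \<in> edge_rel E" by auto
  from Suc.IH[OF c(1)] show ?case
  proof
    assume h: "reach (E - {e}) a c"
    show ?thesis
    proof (cases "{c, b} = e")
      case True
      have ab: "(a, b) \<in> (edge_rel E) ^^ Suc m" using c by auto
      have "\<forall>y\<in>e. \<exists>j\<le>Suc m. (a, y) \<in> (edge_rel E) ^^ j"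
      proof
        fix y assume "y \<in> e"
        then have "y = c \<or> y = b" using True by auto
        then show "\<exists>j\<le>Suc m. (a, y) \<in> (edge_rel E) ^^ j"
          using ab c(1) le_SucI[of m m] by blast
      qed
      then show ?thesis by blast
    next
      case False
      then have "(c, b) \<in> edge_rel (E - {e})" using c(2) by (auto simp: edge_rel_def)
      then have "reach (E - {e}) a b" using h unfolding reach_edge_rel by (rule rtrancl_into_rtrancl[rotated])
      then show ?thesis by blast
    qed
  next
    assume "\<forall>y\<in>e. \<exists>j\<le>m. (a, y) \<in> (edge_rel E) ^^ j"
    then show ?thesis using le_SucI by blast
  qed
qed

lemma reach_closed:
  assumes "reach E a b" "a \<in> D" "\<And>u w. {u, w} \<in> E \<Longrightarrow> u \<in> D \<Longrightarrow> w \<in> D"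
  shows "b \<in> D"
  using assms(1,2) unfolding reach_edge_rel
  by (induction rule: rtrancl_induct) (auto simp: edge_rel_def intro: assms(3))

definition pmap_edges :: "(nat \<Rightarrow> nat) \<Rightarrow> nat set \<Rightarrow> nat set set" where
  "pmap_edges p V = {{i, p i} | i. i \<in> V}"

lemma parent_not_reaches_self:
  assumes p: "p \<in> parent_maps r V" and rV: "r \<notin> V" and i: "i \<in> V" and c: "(p i, i) \<in> (parent_rel p V)\<^sup>*"
  shows False
proof -
  have "(b, i) \<in> (parent_rel p V)\<^sup>*" if "(i, b) \<in> (parent_rel p V)\<^sup>*" for b
    using that
  proof (induction rule: rtrancl_induct)
    case base then show ?case by auto
  next
    case (step b c')
    have c': "b \<in> V" "c' = p b" using step(2) by (auto simp: parent_rel_iff)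
    show ?case
    proof (cases "b = i")
      case True then show ?thesis using c c' by simp
    next
      case False
      then obtain y where "(b, y) \<in> parent_rel p V" "(y, i) \<in> (parent_rel p V)\<^sup>*"
        using step(3) by (metis converse_rtranclE)
      then show ?thesis using c' by (auto simp: parent_rel_iff)
    qed
  qed
  then have "(r, i) \<in> (parent_rel p V)\<^sup>*" using parent_mapsD(3)[OF p i] by blast
  then have "i = r" using parent_rel_rtrancl_outside rV by blast
  then show False using i rV by auto
qed

context
  fixes p :: "nat \<Rightarrow> nat" and n :: nat
  assumes p: "p \<in> parent_maps 0 {1..n}"
begin

lemma parent_in_range: "i \<in> {1..n} \<Longrightarrow> p i \<in> {0..n}"
  using parent_mapsD(1)[OF p] by fastforce

lemma parent_neq_self: "i \<in> {1..n} \<Longrightarrow> p i \<noteq> i"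
  using parent_not_reaches_self[OF p, of i] by auto

definition descendants :: "nat \<Rightarrow> nat set" where "descendants i = {j. (j, i) \<in> (parent_rel p {1..n})\<^sup>*}"

lemma descendants_edge_iff:
  assumes i: "i \<in> {1..n}" and j: "j \<in> {1..n}" and ne: "{j, p j} \<noteq> {i, p i}"
  shows "j \<in> descendants i \<longleftrightarrow> p j \<in> descendants i"
proof
  assume "j \<in> descendants i"
  then have h: "(j, i) \<in> (parent_rel p {1..n})\<^sup>*" by (simp add: descendants_def)
  have "j \<noteq> i" using ne by auto
  then obtain y where "(j, y) \<in> parent_rel p {1..n}" "(y, i) \<in> (parent_rel p {1..n})\<^sup>*"
    using h by (metis converse_rtranclE)
  then show "p j \<in> descendants i" by (auto simp: descendants_def parent_rel_iff)
next
  assume "p j \<in> descendants i"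
  then have "(p j, i) \<in> (parent_rel p {1..n})\<^sup>*" by (simp add: descendants_def)
  moreover have "(j, p j) \<in> parent_rel p {1..n}" using j by (simp add: parent_rel_iff)
  ultimately show "j \<in> descendants i" by (auto simp: descendants_def)
qed

lemma descendants_basic:
  assumes i: "i \<in> {1..n}"
  shows "i \<in> descendants i" "p i \<notin> descendants i" "0 \<notin> descendants i"
proof -
  show "i \<in> descendants i" by (simp add: descendants_def)
  show "p i \<notin> descendants i" using parent_not_reaches_self[OF p _ i] by (auto simp: descendants_def)
  show "0 \<notin> descendants i"
  proof
    assume "0 \<in> descendants i"
    then have "i = 0" using parent_rel_rtrancl_outside[of 0 i p "{1..n}"] by (auto simp: descendants_def)
    then show False using i by auto
  qed
qed

lemma descendants_closed:
  assumes i: "i \<in> {1..n}" and e: "{u, w} \<in> pmap_edges p {1..n} - {{i, p i}}" and u: "u \<in> descendants i"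
  shows "w \<in> descendants i"
proof -
  obtain j where j: "j \<in> {1..n}" "{u, w} = {j, p j}" using e by (auto simp: pmap_edges_def)
  have ne: "{j, p j} \<noteq> {i, p i}" using e j by auto
  from descendants_edge_iff[OF i j(1) ne] j(2) u show ?thesis by (auto simp: doubleton_eq_iff)
qed

lemma pmap_edges_in_trees: "pmap_edges p {1..n} \<in> trees n"
proof -
  have a: "e \<subseteq> {0..n} \<and> card e = 2" if "e \<in> pmap_edges p {1..n}" for e
    using that parent_in_range parent_neq_self by (fastforce simp: pmap_edges_def card_insert_if)
  have b: "reach (pmap_edges p {1..n}) 0 i" if "i \<in> {0..n}" for i
  proof (cases "i = 0")
    case True then show ?thesis by (simp add: reach_refl)
  next
    case False
    then have "i \<in> {1..n}" using that by auto
    then have "(i, 0) \<in> (parent_rel p {1..n})\<^sup>*" using parent_mapsD(3)[OF p] by auto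
    moreover have "parent_rel p {1..n} \<subseteq> edge_rel (pmap_edges p {1..n})"
      by (auto simp: parent_rel_def edge_rel_def pmap_edges_def)
    ultimately have "reach (pmap_edges p {1..n}) i 0" by (auto simp: reach_edge_rel dest: rtrancl_mono)
    then show ?thesis by (rule reach_sym)
  qed
  have c: "\<not> reach (pmap_edges p {1..n} - {e}) a b" if eE: "e \<in> pmap_edges p {1..n}" and eab: "e = {a, b}" for e a b
  proof
    assume r: "reach (pmap_edges p {1..n} - {e}) a b"
    obtain i where i: "i \<in> {1..n}" "e = {i, p i}" using eE by (auto simp: pmap_edges_def)
    have cl: "\<And>u w. {u, w} \<in> pmap_edges p {1..n} - {e} \<Longrightarrow> u \<in> descendants i \<Longrightarrow> w \<in> descendants i"
      using descendants_closed[OF i(1)] i(2) by blast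
    have r2: "reach (pmap_edges p {1..n} - {e}) b a" using r by (rule reach_sym)
    have ab: "b \<in> descendants i" if "a \<in> descendants i" using r that cl by (rule reach_closed)
    have ba: "a \<in> descendants i" if "b \<in> descendants i" using r2 that cl by (rule reach_closed)
    have "a \<in> descendants i \<longleftrightarrow> b \<in> descendants i" using ab ba by blast
    moreover have "{a, b} = {i, p i}" using eab i by simp
    ultimately show False using descendants_basic[OF i(1)] by (auto simp: doubleton_eq_iff)
  qed
  show ?thesis using a b c by (auto simp: trees_def)
qed

lemma reach_root_avoiding_parent_edge:
  assumes i: "i \<in> {1..n}" and j: "(j, 0) \<in> (parent_rel p {1..n})\<^sup>*" "j \<notin> descendants i"
  shows "reach (pmap_edges p {1..n} - {{p i, i}}) j 0"
  using j
proof (induction rule: converse_rtrancl_induct)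
  case base
  then show ?case by (simp add: reach_refl)
next
  case (step j j')
  let ?E = "pmap_edges p {1..n} - {{p i, i}}"
  have jj: "j \<in> {1..n}" "j' = p j" using step(1) by (auto simp: parent_rel_iff)
  have j'D: "j' \<notin> descendants i"
    using step(1,4) by (auto simp: descendants_def intro: converse_rtrancl_into_rtrancl)
  have "j \<noteq> i" using step(4) descendants_basic(1)[OF i] by auto
  moreover have "(j, i) \<notin> parent_rel p {1..n}" using step(4) by (auto simp: descendants_def)
  ultimately have "{j, j'} \<noteq> {p i, i}" using jj by (auto simp: doubleton_eq_iff parent_rel_iff)
  then have "{j, j'} \<in> ?E" using jj by (auto simp: pmap_edges_def)
  then have "reach ?E j j'" by (rule reach_edge)
  then show ?case using step(3) j'D reach_trans by blast
qed

lemma children_pmap_edges: "children (pmap_edges p {1..n}) k = fibre {1..n} p k"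
proof
  show "children (pmap_edges p {1..n}) k \<subseteq> fibre {1..n} p k"
  proof
    fix i assume "i \<in> children (pmap_edges p {1..n}) k"
    then have e: "{k, i} \<in> pmap_edges p {1..n}" and r: "reach (pmap_edges p {1..n} - {{k, i}}) k 0"
      by (auto simp: children_def intro: reach_sym)
    obtain j where j: "j \<in> {1..n}" "{k, i} = {j, p j}" using e by (auto simp: pmap_edges_def)
    show "i \<in> fibre {1..n} p k"
    proof (cases "i = j")
      case True then show ?thesis using j by (auto simp: fibre_def doubleton_eq_iff)
    next
      case False
      then have kj: "k = j" "i = p j" using j(2) by (auto simp: doubleton_eq_iff)
      have cl: "\<And>u w. {u, w} \<in> pmap_edges p {1..n} - {{k, i}} \<Longrightarrow> u \<in> descendants j \<Longrightarrow> w \<in> descendants j"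
        using descendants_closed[OF j(1)] kj by blast
      have "k \<in> descendants j" using descendants_basic(1)[OF j(1)] kj by simp
      have "0 \<in> descendants j" using r \<open>k \<in> descendants j\<close> cl by (rule reach_closed)
      then show ?thesis using descendants_basic(3)[OF j(1)] by simp
    qed
  qed
  show "fibre {1..n} p k \<subseteq> children (pmap_edges p {1..n}) k"
  proof
    fix i assume "i \<in> fibre {1..n} p k"
    then have i: "i \<in> {1..n}" "p i = k" by (auto simp: fibre_def)
    have "(k, 0) \<in> (parent_rel p {1..n})\<^sup>*"
    proof (cases "k = 0")
      case False
      then have "k \<in> {1..n}" using parent_in_range[OF i(1)] i(2) by auto
      then show ?thesis using parent_mapsD(3)[OF p] by auto
    qed simp
    moreover have "k \<notin> descendants i" using descendants_basic(2)[OF i(1)] i(2) by simp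
    ultimately have "reach (pmap_edges p {1..n} - {{k, i}}) k 0"
      using reach_root_avoiding_parent_edge[OF i(1)] i(2) by blast
    moreover have "{k, i} \<in> pmap_edges p {1..n}" using i by (auto simp: pmap_edges_def insert_commute)
    ultimately show "i \<in> children (pmap_edges p {1..n}) k" by (auto simp: children_def intro: reach_sym)
  qed
qed

end


definition root_dist :: "nat set set \<Rightarrow> nat \<Rightarrow> nat" where
  "root_dist T i = (LEAST m. (0, i) \<in> (edge_rel T) ^^ m)"

definition tree_parent :: "nat \<Rightarrow> nat set set \<Rightarrow> nat \<Rightarrow> nat" where
  "tree_parent n T = restrict (\<lambda>i. THE k. i \<in> children T k) {1..n}"

context
  fixes T :: "nat set set" and n :: nat
  assumes T: "T \<in> trees n"
begin

lemma tree_edge: "e \<in> T \<Longrightarrow> e \<subseteq> {0..n} \<and> card e = 2"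
  using T by (auto simp: trees_def)

lemma tree_connected: "i \<in> {0..n} \<Longrightarrow> reach T 0 i"
  using T by (auto simp: trees_def)

lemma tree_bridge: "{a, b} \<in> T \<Longrightarrow> \<not> reach (T - {{a, b}}) a b"
  using T unfolding trees_def by blast

lemma children_unique:
  assumes ik: "i \<in> children T k" and ik': "i \<in> children T k'"
  shows "k = k'"
proof (rule ccontr)
  assume kk: "k \<noteq> k'"
  let ?e = "{k, i}" let ?e' = "{k', i}"
  have e: "?e \<in> T" and r1: "reach (T - {?e}) 0 k" using ik by (auto simp: children_def)
  have e': "?e' \<in> T" and r2: "reach (T - {?e'}) 0 k'" using ik' by (auto simp: children_def)
  have ne: "?e \<noteq> ?e'" using kk by (auto simp: doubleton_eq_iff)
  have b1: "\<not> reach (T - {?e}) k i" using tree_bridge[OF e] .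
  have b2: "\<not> reach (T - {?e'}) k' i" using tree_bridge[OF e'] .
  have s1: "reach (T - {?e}) k' i" using e' ne by (intro reach_edge) auto
  have s2: "reach (T - {?e'}) k i" using e ne by (intro reach_edge) auto
  from reach_remove_edge[OF r1, of ?e']
  show False
  proof
    assume "reach (T - {?e} - {?e'}) 0 k"
    then have "reach (T - {?e'}) 0 k" by (rule reach_mono[rotated]) auto
    then have "reach (T - {?e'}) k' i"
      using r2 s2 by (meson reach_sym reach_trans)
    then show False using b2 by simp
  next
    assume "\<exists>x\<in>?e'. reach (T - {?e} - {?e'}) 0 x"
    then obtain x where x: "x \<in> ?e'" "reach (T - {?e}) 0 x"
      using reach_mono[of "T - {?e} - {?e'}" "T - {?e}"] by blast
    show False
    proof (cases "x = i")
      case True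
      then have "reach (T - {?e}) k i" using r1 x by (meson reach_sym reach_trans)
      then show False using b1 by simp
    next
      case False
      then have "x = k'" using x by auto
      then have "reach (T - {?e}) k i" using r1 x s1 by (meson reach_sym reach_trans)
      then show False using b1 by simp
    qed
  qed
qed

lemma children_in_tree: "i \<in> children T k \<Longrightarrow> i \<in> {0..n} \<and> k \<in> {0..n} \<and> {k, i} \<in> T"
proof -
  assume "i \<in> children T k"
  then have e: "{k, i} \<in> T" by (auto simp: children_def)
  then have "{k, i} \<subseteq> {0..n}" using tree_edge by blast
  then show ?thesis using e by auto
qed

lemma tree_parent_exists:
  assumes i: "i \<in> {1..n}"
  shows "\<exists>k. i \<in> children T k \<and> root_dist T k < root_dist T i"
proof -
  have "reach T 0 i" using tree_connected i by auto
  then obtain m where "(0, i) \<in> (edge_rel T) ^^ m"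
    by (auto simp: reach_edge_rel dest: rtrancl_power[THEN iffD1])
  then have d: "(0, i) \<in> (edge_rel T) ^^ root_dist T i" unfolding root_dist_def by (rule LeastI)
  have "root_dist T i \<noteq> 0"
  proof
    assume "root_dist T i = 0" then show False using d i by simp
  qed
  then obtain m where m: "root_dist T i = Suc m" by (cases "root_dist T i") auto
  then obtain k where k: "(0, k) \<in> (edge_rel T) ^^ m" "(k, i) \<in> edge_rel T" using d by auto
  have dk: "root_dist T k \<le> m" unfolding root_dist_def using k(1) by (rule Least_le)
  from reach_remove_edge_relpow[OF k(1), of "{k, i}"]
  have "reach (T - {{k, i}}) 0 k"
  proof
    assume "\<forall>y\<in>{k, i}. \<exists>j\<le>m. (0, y) \<in> (edge_rel T) ^^ j"
    then obtain j where j: "j \<le> m" "(0, i) \<in> (edge_rel T) ^^ j" by auto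
    have "root_dist T i \<le> j" unfolding root_dist_def using j(2) by (rule Least_le)
    then show ?thesis using j m by simp
  qed
  then have "i \<in> children T k" using k(2) by (auto simp: children_def edge_rel_def)
  then show ?thesis using dk m by auto
qed

lemma tree_parent_children: "i \<in> {1..n} \<Longrightarrow> i \<in> children T (tree_parent n T i)"
proof -
  assume i: "i \<in> {1..n}"
  obtain k where "i \<in> children T k" using tree_parent_exists[OF i] by auto
  then have "\<exists>!k. i \<in> children T k" using children_unique by blast
  then show ?thesis using i unfolding tree_parent_def by (auto intro: theI')
qed

lemma tree_parent_eq: "i \<in> children T k \<Longrightarrow> i \<in> {1..n} \<Longrightarrow> tree_parent n T i = k"
  using tree_parent_children children_unique by blast

lemma tree_parent_in_parent_maps: "tree_parent n T \<in> parent_maps 0 {1..n}"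
proof -
  have vals: "tree_parent n T i \<in> insert 0 {1..n}" if "i \<in> {1..n}" for i
    using children_in_tree[OF tree_parent_children[OF that]] by auto
  have "(i, 0) \<in> (parent_rel (tree_parent n T) {1..n})\<^sup>*" if "i \<in> {0..n}" for i
    using that
  proof (induction "root_dist T i" arbitrary: i rule: less_induct)
    case less
    show ?case
    proof (cases "i = 0")
      case False
      then have i: "i \<in> {1..n}" using less.prems by auto
      obtain k where k: "i \<in> children T k" "root_dist T k < root_dist T i"
        using tree_parent_exists[OF i] by auto
      have pk: "tree_parent n T i = k" using tree_parent_eq[OF k(1) i] .
      have "k \<in> {0..n}" using children_in_tree[OF k(1)] by auto
      then have "(k, 0) \<in> (parent_rel (tree_parent n T) {1..n})\<^sup>*" using less.hyps k(2) by blast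
      moreover have "(i, k) \<in> parent_rel (tree_parent n T) {1..n}" using i pk by (auto simp: parent_rel_iff)
      ultimately show ?thesis by (meson converse_rtrancl_into_rtrancl)
    qed simp
  qed
  then show ?thesis using vals by (auto simp: parent_maps_def tree_parent_def)
qed

lemma tree_edge_in_pmap_edges:
  assumes e: "{a, b} \<in> T" and r: "reach (T - {{a, b}}) 0 a"
  shows "{a, b} \<in> pmap_edges (tree_parent n T) {1..n}"
proof -
  have "b \<noteq> 0"
  proof
    assume "b = 0"
    then have "reach (T - {{a, b}}) a b" using reach_sym[OF r] by simp
    then show False using tree_bridge[OF e] by simp
  qed
  then have b: "b \<in> {1..n}" using tree_edge[OF e] by auto
  have "b \<in> children T a" using e r by (auto simp: children_def)
  then have "tree_parent n T b = a" using tree_parent_eq b by auto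
  then show ?thesis using b by (auto simp: pmap_edges_def insert_commute)
qed

lemma pmap_edges_tree_parent: "pmap_edges (tree_parent n T) {1..n} = T"
proof
  show "pmap_edges (tree_parent n T) {1..n} \<subseteq> T"
  proof
    fix e assume "e \<in> pmap_edges (tree_parent n T) {1..n}"
    then obtain i where i: "i \<in> {1..n}" "e = {i, tree_parent n T i}" by (auto simp: pmap_edges_def)
    have "{tree_parent n T i, i} \<in> T" using children_in_tree[OF tree_parent_children[OF i(1)]] by blast
    then show "e \<in> T" using i by (simp add: insert_commute)
  qed
  show "T \<subseteq> pmap_edges (tree_parent n T) {1..n}"
  proof
    fix e assume e: "e \<in> T"
    then obtain a b where ab: "e = {a, b}"
      using tree_edge[OF e] by (auto simp: card_2_iff)
    have "a \<in> {0..n}" using tree_edge[OF e] ab by auto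
    then have "reach (T - {e}) 0 a \<or> reach (T - {e}) 0 b"
      using reach_remove_edge[OF tree_connected, of a e] ab by auto
    then show "e \<in> pmap_edges (tree_parent n T) {1..n}"
    proof
      assume "reach (T - {e}) 0 a"
      then show ?thesis using tree_edge_in_pmap_edges[of a b] e ab by simp
    next
      assume "reach (T - {e}) 0 b"
      moreover have "e = {b, a}" using ab by blast
      ultimately show ?thesis using tree_edge_in_pmap_edges[of b a] e by simp
    qed
  qed
qed

end

lemma bij_betw_pmap_edges: "bij_betw (\<lambda>p. pmap_edges p {1..n}) (parent_maps 0 {1..n}) (trees n)"
proof (rule bij_betw_imageI)
  show "inj_on (\<lambda>p. pmap_edges p {1..n}) (parent_maps 0 {1..n})"
  proof (rule inj_onI)
    fix p q assume p: "p \<in> parent_maps 0 {1..n}" and q: "q \<in> parent_maps 0 {1..n}" and e: "pmap_edges p {1..n} = pmap_edges q {1..n}"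
    have f: "fibre {1..n} p k = fibre {1..n} q k" for k
      using children_pmap_edges[OF p, of k] children_pmap_edges[OF q, of k] e by simp
    show "p = q"
    proof
      fix i show "p i = q i"
      proof (cases "i \<in> {1..n}")
        case True
        then have "i \<in> fibre {1..n} q (p i)" using f[of "p i"] by (auto simp: fibre_def)
        then show ?thesis by (auto simp: fibre_def)
      qed (simp add: parent_mapsD(2)[OF p] parent_mapsD(2)[OF q])
    qed
  qed
  show "(\<lambda>p. pmap_edges p {1..n}) ` parent_maps 0 {1..n} = trees n"
    using pmap_edges_in_trees tree_parent_in_parent_maps pmap_edges_tree_parent by blast
qed

lemma tree_weight_star_weight:
  "tree_weight v n T x = (\<Prod>k\<in>{0..n}. star_weight (\<lambda>a b. ennreal \<bar>mayer v a b\<bar>) (\<lambda>a b. ennreal (1 + mayer v a b)) (x k) (children T k) x)"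
  by (simp add: tree_weight_def star_weight_def incr_pairs_def)

lemma sum_trees_eq_sum_parent_maps:
  "(\<Sum>T\<in>trees n. tree_weight v n T x) =
   (\<Sum>p\<in>parent_maps 0 {1..n}. pmap_weight (\<lambda>a b. ennreal \<bar>mayer v a b\<bar>) (\<lambda>a b. ennreal (1 + mayer v a b)) 0 {1..n} p x)"
proof -
  have iv: "{0..n} = insert 0 {1..n}" by auto
  have "(\<Sum>T\<in>trees n. tree_weight v n T x) = (\<Sum>p\<in>parent_maps 0 {1..n}. tree_weight v n (pmap_edges p {1..n}) x)"
    using sum.reindex_bij_betw[OF bij_betw_pmap_edges, of "\<lambda>T. tree_weight v n T x"] by simp
  also have "\<dots> = (\<Sum>p\<in>parent_maps 0 {1..n}. pmap_weight (\<lambda>a b. ennreal \<bar>mayer v a b\<bar>) (\<lambda>a b. ennreal (1 + mayer v a b)) 0 {1..n} p x)"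
  proof (rule sum.cong[OF refl])
    fix p assume p: "p \<in> parent_maps 0 {1..n}"
    show "tree_weight v n (pmap_edges p {1..n}) x = pmap_weight (\<lambda>a b. ennreal \<bar>mayer v a b\<bar>) (\<lambda>a b. ennreal (1 + mayer v a b)) 0 {1..n} p x"
      unfolding tree_weight_star_weight pmap_weight_def children_pmap_edges[OF p] iv ..
  qed
  finally show ?thesis .
qed



section \<open>The exponential formula\<close>

lemma suminf_swap_ennreal: "(\<Sum>i. \<Sum>j. f i j) = (\<Sum>j. \<Sum>i. (f i j :: ennreal))"
proof -
  interpret P: pair_sigma_finite "count_space (UNIV::nat set)" "count_space (UNIV::nat set)"
    by (intro pair_sigma_finite.intro sigma_finite_measure_count_space)
  have m: "case_prod f \<in> borel_measurable (count_space UNIV \<Otimes>\<^sub>M count_space UNIV)"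
    by (simp add: pair_measure_countable)
  have "(\<Sum>i. \<Sum>j. f i j) = (\<integral>\<^sup>+i. (\<integral>\<^sup>+j. f i j \<partial>count_space UNIV) \<partial>count_space UNIV)"
    by (simp add: nn_integral_count_space_nat)
  also have "\<dots> = (\<integral>\<^sup>+j. (\<integral>\<^sup>+i. f i j \<partial>count_space UNIV) \<partial>count_space UNIV)"
    by (rule P.Fubini'[OF m, symmetric])
  also have "\<dots> = (\<Sum>j. \<Sum>i. f i j)"
    by (simp add: nn_integral_count_space_nat)
  finally show ?thesis .
qed

lemma suminf_shift_ennreal: "(\<Sum>m. if b \<le> m then f (m - b) else 0) = (\<Sum>d. (f d :: ennreal))"
proof -
  have "(\<Sum>m. if b \<le> m then f (m - b) else 0) = (\<Sum>m. (if b \<le> m + b then f (m + b - b) else 0)) + (\<Sum>i<b. if b \<le> i then f (i - b) else (0::ennreal))"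
    by (rule suminf_offset) simp
  then show ?thesis by simp
qed

lemma Cauchy_product_ennreal:
  "(\<Sum>b. a b) * (\<Sum>d. c d) = (\<Sum>m. \<Sum>b\<le>m. a b * (c (m - b) :: ennreal))"
proof -
  have "(\<Sum>b. a b) * (\<Sum>d. c d) = (\<Sum>b. \<Sum>d. a b * c d)"
    by simp
  also have "\<dots> = (\<Sum>b. \<Sum>m. if b \<le> m then a b * c (m - b) else 0)"
    using suminf_shift_ennreal[of _ "\<lambda>d. a _ * c d"] by simp
  also have "\<dots> = (\<Sum>m. \<Sum>b. if b \<le> m then a b * c (m - b) else 0)"
    by (rule suminf_swap_ennreal)
  also have "\<dots> = (\<Sum>m. \<Sum>b\<le>m. a b * c (m - b))"
  proof (rule suminf_cong)
    fix m
    have "(\<Sum>b. if b \<le> m then a b * c (m - b) else 0) = (\<Sum>b<Suc m. if b \<le> m then a b * c (m - b) else 0)"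
      by (rule suminf_finite) auto
    also have "\<dots> = (\<Sum>b\<le>m. a b * c (m - b))"
      by (simp add: lessThan_Suc_atMost)
    finally show "(\<Sum>b. if b \<le> m then a b * c (m - b) else 0) = (\<Sum>b\<le>m. a b * c (m - b))" .
  qed
  finally show ?thesis .
qed

definition fibre_sum :: "(nat \<Rightarrow> nat \<Rightarrow> ennreal) \<Rightarrow> nat set \<Rightarrow> nat set \<Rightarrow> ennreal" where
  "fibre_sum g K S = (\<Sum>\<pi>\<in>S \<rightarrow>\<^sub>E K. \<Prod>j\<in>K. g j (card (fibre S \<pi> j)))"

lemma bij_betw_PiE_precompose:
  assumes bij: "bij_betw \<sigma> S' S"
  shows "bij_betw (\<lambda>\<pi>. \<lambda>i\<in>S'. \<pi> (\<sigma> i)) (S \<rightarrow>\<^sub>E K) (S' \<rightarrow>\<^sub>E K)"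
proof -
  define \<tau> where "\<tau> = the_inv_into S' \<sigma>"
  have t1: "\<tau> i \<in> S'" "\<sigma> (\<tau> i) = i" if "i \<in> S" for i
    using that bij unfolding \<tau>_def bij_betw_def
    by (auto intro: the_inv_into_into f_the_inv_into_f)
  have t2: "\<tau> (\<sigma> i) = i" "\<sigma> i \<in> S" if "i \<in> S'" for i
    using that bij unfolding \<tau>_def bij_betw_def by (auto intro: the_inv_into_f_f)
  show ?thesis
  proof (rule bij_betwI[where g = "\<lambda>\<pi>. \<lambda>i\<in>S. \<pi> (\<tau> i)"])
    show "(\<lambda>\<pi>. \<lambda>i\<in>S'. \<pi> (\<sigma> i)) \<in> (S \<rightarrow>\<^sub>E K) \<rightarrow> (S' \<rightarrow>\<^sub>E K)" using t2 by auto
    show "(\<lambda>\<pi>. \<lambda>i\<in>S. \<pi> (\<tau> i)) \<in> (S' \<rightarrow>\<^sub>E K) \<rightarrow> (S \<rightarrow>\<^sub>E K)" using t1 by auto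
    show "(\<lambda>i\<in>S. (\<lambda>i\<in>S'. \<pi> (\<sigma> i)) (\<tau> i)) = \<pi>" if "\<pi> \<in> S \<rightarrow>\<^sub>E K" for \<pi>
    proof
      fix i show "(\<lambda>i\<in>S. (\<lambda>i\<in>S'. \<pi> (\<sigma> i)) (\<tau> i)) i = \<pi> i"
        using that t1 by (cases "i \<in> S") (auto simp: PiE_def extensional_def)
    qed
    show "(\<lambda>i\<in>S'. (\<lambda>i\<in>S. \<pi> (\<tau> i)) (\<sigma> i)) = \<pi>" if "\<pi> \<in> S' \<rightarrow>\<^sub>E K" for \<pi>
    proof
      fix i show "(\<lambda>i\<in>S'. (\<lambda>i\<in>S. \<pi> (\<tau> i)) (\<sigma> i)) i = \<pi> i"
        using that t2 by (cases "i \<in> S'") (auto simp: PiE_def extensional_def)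
    qed
  qed
qed

lemma card_fibre_precompose:
  assumes bij: "bij_betw \<sigma> S' S"
  shows "card (fibre S' (\<lambda>i\<in>S'. \<pi> (\<sigma> i)) j) = card (fibre S \<pi> j)"
proof -
  have inj: "inj_on \<sigma> (fibre S' (\<lambda>i\<in>S'. \<pi> (\<sigma> i)) j)"
    using bij unfolding bij_betw_def by (rule inj_on_subset[OF conjunct1]) (auto simp: fibre_def)
  have "\<sigma> ` fibre S' (\<lambda>i\<in>S'. \<pi> (\<sigma> i)) j = fibre S \<pi> j"
    using bij unfolding bij_betw_def fibre_def by auto
  then show ?thesis using card_image[OF inj] by simp
qed

lemma fibre_sum_bij_betw:
  assumes bij: "bij_betw \<sigma> S' S"
  shows "fibre_sum g K S = fibre_sum g K S'"
proof -
  have "fibre_sum g K S' = (\<Sum>\<pi>\<in>S \<rightarrow>\<^sub>E K. \<Prod>j\<in>K. g j (card (fibre S' (\<lambda>i\<in>S'. \<pi> (\<sigma> i)) j)))"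
    unfolding fibre_sum_def using sum.reindex_bij_betw[OF bij_betw_PiE_precompose[OF bij, of K],
       of "\<lambda>\<pi>. \<Prod>j\<in>K. g j (card (fibre S' \<pi> j))"] by simp
  also have "\<dots> = fibre_sum g K S"
    unfolding fibre_sum_def card_fibre_precompose[OF bij] ..
  finally show ?thesis ..
qed

lemma bij_betw_PiE_insert:
  assumes j0: "j0 \<notin> K"
  shows "bij_betw (\<lambda>(B, \<pi>'). \<lambda>i\<in>S. if i \<in> B then j0 else \<pi>' i)
    (SIGMA B:Pow S. (S - B) \<rightarrow>\<^sub>E K) (S \<rightarrow>\<^sub>E insert j0 K)"
proof -
  define \<Phi> where "\<Phi> = (\<lambda>(B, \<pi>'). \<lambda>i\<in>S. if i \<in> B then j0 else \<pi>' i)"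
  define \<Psi> where "\<Psi> = (\<lambda>\<pi>. (fibre S \<pi> j0, restrict \<pi> (S - fibre S \<pi> j0)))"
  have "bij_betw \<Phi> (SIGMA B:Pow S. (S - B) \<rightarrow>\<^sub>E K) (S \<rightarrow>\<^sub>E insert j0 K)"
  proof (rule bij_betwI[where g = \<Psi>])
    show "\<Phi> \<in> (SIGMA B:Pow S. (S - B) \<rightarrow>\<^sub>E K) \<rightarrow> (S \<rightarrow>\<^sub>E insert j0 K)"
      by (auto simp: \<Phi>_def PiE_iff)
    show "\<Psi> \<in> (S \<rightarrow>\<^sub>E insert j0 K) \<rightarrow> (SIGMA B:Pow S. (S - B) \<rightarrow>\<^sub>E K)"
    proof
      fix \<pi> assume \<pi>: "\<pi> \<in> S \<rightarrow>\<^sub>E insert j0 K"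
      have "\<forall>i\<in>S - fibre S \<pi> j0. \<pi> i \<in> K" using \<pi> by (auto simp: fibre_def PiE_iff)
      then have "restrict \<pi> (S - fibre S \<pi> j0) \<in> (S - fibre S \<pi> j0) \<rightarrow>\<^sub>E K"
        by (simp add: restrict_PiE_iff)
      moreover have "fibre S \<pi> j0 \<in> Pow S" by (auto simp: fibre_def)
      ultimately show "\<Psi> \<pi> \<in> (SIGMA B:Pow S. (S - B) \<rightarrow>\<^sub>E K)" by (simp add: \<Psi>_def)
    qed
    show "\<Psi> (\<Phi> x) = x" if x: "x \<in> (SIGMA B:Pow S. (S - B) \<rightarrow>\<^sub>E K)" for x
    proof -
      obtain B \<pi>' where x': "x = (B, \<pi>')" "B \<subseteq> S" "\<pi>' \<in> (S - B) \<rightarrow>\<^sub>E K" using x by auto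
      have "\<pi>' i \<noteq> j0" if "i \<in> S - B" for i using x'(3) that j0 by auto
      then have bB: "fibre S (\<Phi> x) j0 = B" using x' by (auto simp: fibre_def \<Phi>_def)
      have "restrict (\<Phi> x) (S - B) = \<pi>'"
      proof
        fix i show "restrict (\<Phi> x) (S - B) i = \<pi>' i"
          using x' by (cases "i \<in> S - B") (auto simp: \<Phi>_def PiE_def extensional_def)
      qed
      then show ?thesis using bB x' by (simp add: \<Psi>_def)
    qed
    show "\<Phi> (\<Psi> y) = y" if y: "y \<in> S \<rightarrow>\<^sub>E insert j0 K" for y
    proof
      fix i show "\<Phi> (\<Psi> y) i = y i"
        using y by (cases "i \<in> S") (auto simp: \<Phi>_def \<Psi>_def fibre_def PiE_def extensional_def)
    qed
  qed
  then show ?thesis by (simp only: \<Phi>_def)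
qed

lemma fibre_sum_insert:
  assumes j0: "j0 \<notin> K" and finS: "finite S" and finK: "finite K"
  shows "fibre_sum g (insert j0 K) S = (\<Sum>B\<in>Pow S. g j0 (card B) * fibre_sum g K (S - B))"
proof -
  define \<Phi> where "\<Phi> = (\<lambda>(B, \<pi>'). \<lambda>i\<in>S. if i \<in> B then j0 else \<pi>' i)"
  have bij: "bij_betw \<Phi> (SIGMA B:Pow S. (S - B) \<rightarrow>\<^sub>E K) (S \<rightarrow>\<^sub>E insert j0 K)"
    unfolding \<Phi>_def by (rule bij_betw_PiE_insert[OF j0])
  have finP: "finite (Pow S)" using finS by simp
  have fin2: "finite ((S - B) \<rightarrow>\<^sub>E K)" for B using finS finK by (intro finite_PiE) auto
  have "fibre_sum g (insert j0 K) S = (\<Sum>x\<in>(SIGMA B:Pow S. (S - B) \<rightarrow>\<^sub>E K). \<Prod>j\<in>insert j0 K. g j (card (fibre S (\<Phi> x) j)))"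
    unfolding fibre_sum_def using sum.reindex_bij_betw[OF bij, of "\<lambda>\<pi>. \<Prod>j\<in>insert j0 K. g j (card (fibre S \<pi> j))"]
    by simp
  also have "\<dots> = (\<Sum>x\<in>(SIGMA B:Pow S. (S - B) \<rightarrow>\<^sub>E K). g j0 (card (fst x)) * (\<Prod>j\<in>K. g j (card (fibre (S - fst x) (snd x) j))))"
  proof (rule sum.cong[OF refl])
    fix x assume x: "x \<in> (SIGMA B:Pow S. (S - B) \<rightarrow>\<^sub>E K)"
    obtain B \<pi>' where x': "x = (B, \<pi>')" "B \<subseteq> S" "\<pi>' \<in> (S - B) \<rightarrow>\<^sub>E K" using x by auto
    have ne: "\<pi>' i \<noteq> j0" if "i \<in> S - B" for i using x'(3) that j0 by auto
    have b0: "fibre S (\<Phi> x) j0 = B" using x' ne by (auto simp: fibre_def \<Phi>_def)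
    have bj: "fibre S (\<Phi> x) j = fibre (S - B) \<pi>' j" if "j \<in> K" for j
      using x' that j0 by (auto simp: fibre_def \<Phi>_def)
    show "(\<Prod>j\<in>insert j0 K. g j (card (fibre S (\<Phi> x) j))) = g j0 (card (fst x)) * (\<Prod>j\<in>K. g j (card (fibre (S - fst x) (snd x) j)))"
      using j0 finK b0 bj x' by (simp add: prod.insert)
  qed
  also have "\<dots> = (\<Sum>B\<in>Pow S. \<Sum>\<pi>'\<in>(S - B) \<rightarrow>\<^sub>E K. g j0 (card B) * (\<Prod>j\<in>K. g j (card (fibre (S - B) \<pi>' j))))"
    using sum.Sigma[OF finP, of "\<lambda>B. (S - B) \<rightarrow>\<^sub>E K" "\<lambda>B \<pi>'. g j0 (card B) * (\<Prod>j\<in>K. g j (card (fibre (S - B) \<pi>' j)))"] fin2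
    by (simp add: case_prod_beta)
  also have "\<dots> = (\<Sum>B\<in>Pow S. g j0 (card B) * fibre_sum g K (S - B))"
    by (simp add: fibre_sum_def sum_distrib_left)
  finally show ?thesis .
qed

lemma sum_Pow_card:
  assumes "finite S"
  shows "(\<Sum>B\<in>Pow S. F (card B)) = (\<Sum>b\<le>card S. of_nat (card S choose b) * (F b :: ennreal))"
proof -
  have "(\<Sum>B\<in>Pow S. F (card B)) = (\<Sum>b\<le>card S. \<Sum>B\<in>{B\<in>Pow S. card B = b}. F (card B))"
    by (rule sum.group[symmetric]) (use assms in \<open>auto intro: card_mono\<close>)
  also have "\<dots> = (\<Sum>b\<le>card S. of_nat (card S choose b) * F b)"
  proof (rule sum.cong[OF refl])
    fix b
    have "card {B\<in>Pow S. card B = b} = card S choose b"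
      using n_subsets[OF assms, of b] by (simp add: Pow_def)
    then show "(\<Sum>B\<in>{B\<in>Pow S. card B = b}. F (card B)) = of_nat (card S choose b) * F b"
      by simp
  qed
  finally show ?thesis .
qed

definition fibre_sum_nat :: "(nat \<Rightarrow> nat \<Rightarrow> ennreal) \<Rightarrow> nat set \<Rightarrow> nat \<Rightarrow> ennreal" where
  "fibre_sum_nat g K m = fibre_sum g K {..<m}"

lemma fibre_sum_card: "finite S \<Longrightarrow> fibre_sum g K S = fibre_sum_nat g K (card S)"
proof -
  assume "finite S"
  then obtain h where "bij_betw h {0..<card S} S" using ex_bij_betw_nat_finite by blast
  then show ?thesis unfolding fibre_sum_nat_def
    using fibre_sum_bij_betw[of h "{..<card S}" S g K] by (simp add: atLeast0LessThan)
qed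

lemma fibre_sum_nat_insert:
  assumes j0: "j0 \<notin> K" and finK: "finite K"
  shows "fibre_sum_nat g (insert j0 K) m = (\<Sum>b\<le>m. of_nat (m choose b) * (g j0 b * fibre_sum_nat g K (m - b)))"
proof -
  have "fibre_sum_nat g (insert j0 K) m = (\<Sum>B\<in>Pow {..<m}. g j0 (card B) * fibre_sum_nat g K (m - card B))"
    unfolding fibre_sum_nat_def
    by (subst fibre_sum_insert[OF j0 _ finK]) (auto intro!: sum.cong simp: fibre_sum_card[folded fibre_sum_nat_def] card_Diff_subset finite_subset)
  also have "\<dots> = (\<Sum>b\<le>m. of_nat (m choose b) * (g j0 b * fibre_sum_nat g K (m - b)))"
    using sum_Pow_card[of "{..<m}" "\<lambda>b. g j0 b * fibre_sum_nat g K (m - b)"] by simp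
  finally show ?thesis .
qed

lemma inverse_fact_mult_fact_ennreal: "ennreal (1 / fact k) * of_nat (fact k) = 1"
proof -
  have "ennreal (1 / fact k) * of_nat (fact k) = ennreal (1 / fact k * fact k)"
    by (subst ennreal_mult) (auto simp: ennreal_of_nat_eq_real_of_nat)
  then show ?thesis by simp
qed

lemma eq_inverse_fact_mult_ennreal: "of_nat (fact k) * X = Y \<Longrightarrow> X = ennreal (1 / fact k) * (Y :: ennreal)"
  by (metis inverse_fact_mult_fact_ennreal mult.assoc mult_1)

lemma inverse_fact_binomial_ennreal:
  assumes "b \<le> m"
  shows "ennreal (1 / fact m) * of_nat (m choose b) = ennreal (1 / fact b) * ennreal (1 / fact (m - b))"
proof -
  have "real (m choose b) = fact m / (fact b * fact (m - b))" using binomial_fact[OF assms] by simp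
  then have "1 / fact m * real (m choose b) = 1 / fact b * (1 / fact (m - b))" by (simp add: field_simps)
  then have "ennreal (1 / fact m * real (m choose b)) = ennreal (1 / fact b * (1 / fact (m - b)))" by simp
  moreover have "ennreal (1 / fact m * real (m choose b)) = ennreal (1 / fact m) * ennreal (real (m choose b))"
    by (rule ennreal_mult) auto
  moreover have "ennreal (1 / fact b * (1 / fact (m - b))) = ennreal (1 / fact b) * ennreal (1 / fact (m - b))"
    by (rule ennreal_mult) auto
  ultimately show ?thesis by (simp add: ennreal_of_nat_eq_real_of_nat)
qed

lemma fibre_sum_nat_empty: "fibre_sum_nat g {} m = (if m = 0 then 1 else 0)"
  by (auto simp: fibre_sum_nat_def fibre_sum_def PiE_empty_range)

lemma inverse_fact_mult_fibre_sum_nat_insert: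
  assumes j0: "j0 \<notin> K" and finK: "finite K"
  shows "ennreal (1 / fact m) * fibre_sum_nat g (insert j0 K) m =
    (\<Sum>b\<le>m. (ennreal (1 / fact b) * g j0 b) * (ennreal (1 / fact (m - b)) * fibre_sum_nat g K (m - b)))"
proof -
  have "ennreal (1 / fact m) * fibre_sum_nat g (insert j0 K) m
      = (\<Sum>b\<le>m. ennreal (1 / fact m) * of_nat (m choose b) * (g j0 b * fibre_sum_nat g K (m - b)))"
    by (simp add: fibre_sum_nat_insert[OF j0 finK] sum_distrib_left mult.assoc)
  also have "\<dots> = (\<Sum>b\<le>m. (ennreal (1 / fact b) * g j0 b) * (ennreal (1 / fact (m - b)) * fibre_sum_nat g K (m - b)))"
  proof (intro sum.cong refl)
    fix b assume "b \<in> {..m}"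
    then have "ennreal (1 / fact m) * of_nat (m choose b) = ennreal (1 / fact b) * ennreal (1 / fact (m - b))"
      by (simp add: inverse_fact_binomial_ennreal)
    then show "ennreal (1 / fact m) * of_nat (m choose b) * (g j0 b * fibre_sum_nat g K (m - b)) =
        (ennreal (1 / fact b) * g j0 b) * (ennreal (1 / fact (m - b)) * fibre_sum_nat g K (m - b))"
      by (simp add: ac_simps)
  qed
  finally show ?thesis .
qed

lemma egf_fibre_sum_nat:
  assumes "finite K"
  shows "(\<Sum>m. ennreal (1 / fact m) * fibre_sum_nat g K m) = (\<Prod>j\<in>K. \<Sum>m. ennreal (1 / fact m) * g j m)"
  using assms
proof (induction K rule: finite_induct)
  case empty
  have "(\<Sum>m. ennreal (1 / fact m) * fibre_sum_nat g {} m) = (\<Sum>m<1. ennreal (1 / fact m) * fibre_sum_nat g {} m)"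
    by (rule suminf_finite) (auto simp: fibre_sum_nat_empty)
  then show ?case by (simp add: fibre_sum_nat_empty)
next
  case (insert j0 K)
  have "(\<Sum>m. ennreal (1 / fact m) * fibre_sum_nat g (insert j0 K) m)
      = (\<Sum>b. ennreal (1 / fact b) * g j0 b) * (\<Sum>d. ennreal (1 / fact d) * fibre_sum_nat g K d)"
    unfolding inverse_fact_mult_fibre_sum_nat_insert[OF insert(2,1)] by (rule Cauchy_product_ennreal[symmetric])
  then show ?case using insert by simp
qed

lemma bij_betw_PiE_postcompose:
  assumes bij: "bij_betw h K C"
  shows "bij_betw (\<lambda>\<pi>'. \<lambda>i\<in>S. h (\<pi>' i)) (S \<rightarrow>\<^sub>E K) (S \<rightarrow>\<^sub>E C)"
proof -
  define \<tau> where "\<tau> = the_inv_into K h"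
  have t1: "\<tau> i \<in> K" "h (\<tau> i) = i" if "i \<in> C" for i
    using that bij unfolding \<tau>_def bij_betw_def
    by (auto intro: the_inv_into_into f_the_inv_into_f)
  have t2: "\<tau> (h i) = i" "h i \<in> C" if "i \<in> K" for i
    using that bij unfolding \<tau>_def bij_betw_def by (auto intro: the_inv_into_f_f)
  show ?thesis
  proof (rule bij_betwI[where g = "\<lambda>\<pi>. \<lambda>i\<in>S. \<tau> (\<pi> i)"])
    show "(\<lambda>\<pi>'. \<lambda>i\<in>S. h (\<pi>' i)) \<in> (S \<rightarrow>\<^sub>E K) \<rightarrow> (S \<rightarrow>\<^sub>E C)" using t2 by (auto simp: PiE_iff)
    show "(\<lambda>\<pi>. \<lambda>i\<in>S. \<tau> (\<pi> i)) \<in> (S \<rightarrow>\<^sub>E C) \<rightarrow> (S \<rightarrow>\<^sub>E K)" using t1 by (auto simp: PiE_iff)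
    show "(\<lambda>i\<in>S. \<tau> ((\<lambda>i\<in>S. h (\<pi> i)) i)) = \<pi>" if "\<pi> \<in> S \<rightarrow>\<^sub>E K" for \<pi>
    proof
      fix i show "(\<lambda>i\<in>S. \<tau> ((\<lambda>i\<in>S. h (\<pi> i)) i)) i = \<pi> i"
        using that t2 by (cases "i \<in> S") (auto simp: PiE_def extensional_def)
    qed
    show "(\<lambda>i\<in>S. h ((\<lambda>i\<in>S. \<tau> (\<pi> i)) i)) = \<pi>" if "\<pi> \<in> S \<rightarrow>\<^sub>E C" for \<pi>
    proof
      fix i show "(\<lambda>i\<in>S. h ((\<lambda>i\<in>S. \<tau> (\<pi> i)) i)) i = \<pi> i"
        using that t1 by (cases "i \<in> S") (auto simp: PiE_def extensional_def)
    qed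
  qed
qed

definition enumerations :: "nat \<Rightarrow> nat set \<Rightarrow> (nat \<Rightarrow> nat) set" where
  "enumerations k C = {h \<in> {1..k} \<rightarrow>\<^sub>E C. inj_on h {1..k}}"

lemma enumerations_bij_betw: "h \<in> enumerations k C \<Longrightarrow> finite C \<Longrightarrow> card C = k \<Longrightarrow> bij_betw h {1..k} C"
proof -
  assume h: "h \<in> enumerations k C" and finC: "finite C" and cC: "card C = k"
  have inj: "inj_on h {1..k}" and sub: "h ` {1..k} \<subseteq> C" using h by (auto simp: enumerations_def)
  have "card (h ` {1..k}) = card C" using card_image[OF inj] cC by simp
  then have "h ` {1..k} = C" using card_subset_eq[OF finC sub] by simp
  then show ?thesis using inj by (simp add: bij_betw_def)
qed

lemma card_enumerations: "finite C \<Longrightarrow> card C = k \<Longrightarrow> card (enumerations k C) = fact k"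
  unfolding enumerations_def
  using card_inj_on_subset_funcset[of "{1..k}" C "{1..k}"] fact_prod_rev[of k, where 'a=nat]
  by simp

lemma sum_fibre_enumeration:
  assumes bij: "bij_betw h {1..k} C" and S: "finite S"
  shows "(\<Sum>\<pi>\<in>S \<rightarrow>\<^sub>E C. \<Prod>j\<in>{1..k}. g j (card (fibre S \<pi> (h j)))) = fibre_sum g {1..k} S"
proof -
  have inj: "inj_on h {1..k}" using bij by (auto simp: bij_betw_def)
  have "(\<Sum>\<pi>\<in>S \<rightarrow>\<^sub>E C. \<Prod>j\<in>{1..k}. g j (card (fibre S \<pi> (h j)))) =
      (\<Sum>\<pi>'\<in>S \<rightarrow>\<^sub>E {1..k}. \<Prod>j\<in>{1..k}. g j (card (fibre S (\<lambda>i\<in>S. h (\<pi>' i)) (h j))))"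
    using sum.reindex_bij_betw[OF bij_betw_PiE_postcompose[OF bij, of S], of "\<lambda>\<pi>. \<Prod>j\<in>{1..k}. g j (card (fibre S \<pi> (h j)))"]
    by simp
  also have "\<dots> = fibre_sum g {1..k} S"
    unfolding fibre_sum_def
  proof (intro sum.cong refl prod.cong arg_cong[where f="g _"] arg_cong[where f=card])
    fix \<pi>' j assume \<pi>': "\<pi>' \<in> S \<rightarrow>\<^sub>E {1..k}" and j: "j \<in> {1..k}"
    show "fibre S (\<lambda>i\<in>S. h (\<pi>' i)) (h j) = fibre S \<pi>' j"
    proof (rule set_eqI)
      fix i show "i \<in> fibre S (\<lambda>i\<in>S. h (\<pi>' i)) (h j) \<longleftrightarrow> i \<in> fibre S \<pi>' j"
      proof (cases "i \<in> S")
        case True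
        then have pi: "\<pi>' i \<in> {1..k}" using \<pi>' by auto
        show ?thesis using True inj_on_eq_iff[OF inj pi j] by (simp add: fibre_def)
      qed (simp add: fibre_def)
    qed
  qed
  finally show ?thesis .
qed

text \<open>In \<open>split_sum g n k\<close> the root of a tree on \<open>{0..n}\<close> has the \<open>k\<close> children \<open>C\<close>, listed by \<open>h\<close>,
  and \<open>\<pi>\<close> distributes the other vertices over their branches; \<open>g j m\<close> weighs the \<open>j\<close>-th branch
  when it has \<open>m\<close> further vertices.\<close>

definition split_sum :: "(nat \<Rightarrow> nat \<Rightarrow> ennreal) \<Rightarrow> nat \<Rightarrow> nat \<Rightarrow> ennreal" where
  "split_sum g n k = (\<Sum>C\<in>{C. C \<subseteq> {1..n} \<and> card C = k}. \<Sum>h\<in>enumerations k C.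
      \<Sum>\<pi>\<in>({1..n} - C) \<rightarrow>\<^sub>E C. \<Prod>j\<in>{1..k}. g j (card (fibre ({1..n} - C) \<pi> (h j))))"

lemma split_sum_eq: "split_sum g n k = of_nat (n choose k) * (of_nat (fact k) * fibre_sum_nat g {1..k} (n - k))"
proof -
  have "split_sum g n k = (\<Sum>C\<in>{C. C \<subseteq> {1..n} \<and> card C = k}. of_nat (fact k) * fibre_sum_nat g {1..k} (n - k))"
    unfolding split_sum_def
  proof (rule sum.cong[OF refl])
    fix C assume C: "C \<in> {C. C \<subseteq> {1..n} \<and> card C = k}"
    have finC: "finite C" using C finite_subset by blast
    have "(\<Sum>h\<in>enumerations k C. \<Sum>\<pi>\<in>({1..n} - C) \<rightarrow>\<^sub>E C. \<Prod>j\<in>{1..k}. g j (card (fibre ({1..n} - C) \<pi> (h j))))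
        = (\<Sum>h\<in>enumerations k C. fibre_sum_nat g {1..k} (n - k))"
    proof (rule sum.cong[OF refl])
      fix h assume h: "h \<in> enumerations k C"
      have "card ({1..n} - C) = n - k" using C by (auto simp: card_Diff_subset finC)
      then show "(\<Sum>\<pi>\<in>({1..n} - C) \<rightarrow>\<^sub>E C. \<Prod>j\<in>{1..k}. g j (card (fibre ({1..n} - C) \<pi> (h j)))) = fibre_sum_nat g {1..k} (n - k)"
        using sum_fibre_enumeration[OF enumerations_bij_betw[OF h finC], of "{1..n} - C" g] C fibre_sum_card[of "{1..n} - C" g "{1..k}"]
        by auto
    qed
    also have "\<dots> = of_nat (fact k) * fibre_sum_nat g {1..k} (n - k)"
      using card_enumerations[OF finC] C by simp
    finally show "(\<Sum>h\<in>enumerations k C. \<Sum>\<pi>\<in>({1..n} - C) \<rightarrow>\<^sub>E C. \<Prod>j\<in>{1..k}. g j (card (fibre ({1..n} - C) \<pi> (h j)))) =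
        of_nat (fact k) * fibre_sum_nat g {1..k} (n - k)" .
  qed
  also have "\<dots> = of_nat (n choose k) * (of_nat (fact k) * fibre_sum_nat g {1..k} (n - k))"
    using n_subsets[of "{1..n}" k] by simp
  finally show ?thesis .
qed

lemma split_sum_eq_0: "n < k \<Longrightarrow> split_sum g n k = 0"
  by (simp add: split_sum_eq binomial_eq_0)

lemma egf_split_sum:
  "(\<Sum>n. ennreal (1 / fact n) * split_sum g n k) = (\<Prod>j\<in>{1..k}. \<Sum>m. ennreal (1 / fact m) * g j m)"
proof -
  have "(\<Sum>n. ennreal (1 / fact n) * split_sum g n k) =
     (\<Sum>n. if k \<le> n then ennreal (1 / fact (n - k)) * fibre_sum_nat g {1..k} (n - k) else 0)"
  proof (rule suminf_cong)
    fix n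
    show "ennreal (1 / fact n) * split_sum g n k = (if k \<le> n then ennreal (1 / fact (n - k)) * fibre_sum_nat g {1..k} (n - k) else 0)"
    proof (cases "k \<le> n")
      case True
      have "ennreal (1 / fact n) * split_sum g n k = (ennreal (1 / fact n) * of_nat (n choose k)) * (of_nat (fact k) * fibre_sum_nat g {1..k} (n - k))"
        by (simp add: split_sum_eq mult.assoc)
      also have "\<dots> = (ennreal (1 / fact k) * of_nat (fact k)) * (ennreal (1 / fact (n - k)) * fibre_sum_nat g {1..k} (n - k))"
        unfolding inverse_fact_binomial_ennreal[OF True] by (simp add: ac_simps)
      also have "\<dots> = ennreal (1 / fact (n - k)) * fibre_sum_nat g {1..k} (n - k)"
        unfolding inverse_fact_mult_fact_ennreal by simp
      finally show ?thesis using True by simp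
    qed (simp add: split_sum_eq)
  qed
  also have "\<dots> = (\<Sum>d. ennreal (1 / fact d) * fibre_sum_nat g {1..k} d)"
    by (rule suminf_shift_ennreal)
  also have "\<dots> = (\<Prod>j\<in>{1..k}. \<Sum>m. ennreal (1 / fact m) * g j m)"
    by (simp add: egf_fibre_sum_nat)
  finally show ?thesis .
qed

lemma split_sum_cong:
  assumes k: "k \<ge> 1" and g: "\<And>j m. m < n \<Longrightarrow> g j m = g' j m"
  shows "split_sum g n k = split_sum g' n k"
  unfolding split_sum_def
proof (intro sum.cong refl prod.cong)
  fix C \<pi> j assume C: "C \<in> {C. C \<subseteq> {1..n} \<and> card C = k}"
  have fin: "finite C" using C finite_subset by blast
  have "card (fibre ({1..n} - C) \<pi> j') \<le> card ({1..n} - C)" for j'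
    by (rule card_mono) (auto simp: fibre_def)
  also have "card ({1..n} - C) = n - k" using C by (auto simp: card_Diff_subset fin)
  finally have le: "card (fibre ({1..n} - C) \<pi> j') \<le> n - k" for j' .
  have "k \<le> n" using card_mono[of "{1..n}" C] C by auto
  then have "n - k < n" using k by arith
  then have "card (fibre ({1..n} - C) \<pi> j') < n" for j' using le[of j'] by linarith
  then show "g j (card (fibre ({1..n} - C) \<pi> (h j))) = g' j (card (fibre ({1..n} - C) \<pi> (h j)))" for h
    using g by blast
qed

lemma sum_split_sum_lessThan_le:
  assumes k: "k \<ge> 1"
  shows "(\<Sum>n<Suc N. ennreal (1 / fact n) * split_sum g n k)
    \<le> (\<Prod>j\<in>{1..k}. \<Sum>l<N. ennreal (1 / fact l) * g j l)"
proof -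
  let ?g = "\<lambda>j l. if l < N then g j l else 0"
  have "(\<Sum>n<Suc N. ennreal (1 / fact n) * split_sum g n k) = (\<Sum>n<Suc N. ennreal (1 / fact n) * split_sum ?g n k)"
    using k by (intro sum.cong refl arg_cong[where f="(*) _"] split_sum_cong) auto
  also have "\<dots> \<le> (\<Sum>n. ennreal (1 / fact n) * split_sum ?g n k)"
    by (rule sum_le_suminf) auto
  also have "\<dots> = (\<Prod>j\<in>{1..k}. \<Sum>l. ennreal (1 / fact l) * ?g j l)"
    by (rule egf_split_sum)
  also have "\<dots> = (\<Prod>j\<in>{1..k}. \<Sum>l<N. ennreal (1 / fact l) * g j l)"
  proof (rule prod.cong[OF refl])
    fix j
    have "(\<Sum>l. ennreal (1 / fact l) * ?g j l) = (\<Sum>l<N. ennreal (1 / fact l) * ?g j l)"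
      by (rule suminf_finite) auto
    then show "(\<Sum>l. ennreal (1 / fact l) * ?g j l) = (\<Sum>l<N. ennreal (1 / fact l) * g j l)"
      by simp
  qed
  finally show ?thesis .
qed

lemma sum_nonempty_subsets_by_card:
  assumes "finite V"
  shows "(\<Sum>C\<in>{C. C \<subseteq> V \<and> C \<noteq> {}}. f C) = (\<Sum>k\<in>{1..card V}. \<Sum>C\<in>{C. C \<subseteq> V \<and> card C = k}. f C)"
proof (rule sum.group[symmetric, THEN trans])
  show "finite {C. C \<subseteq> V \<and> C \<noteq> {}}" using assms by (auto intro: finite_subset[of _ "Pow V"])
  show "card ` {C. C \<subseteq> V \<and> C \<noteq> {}} \<subseteq> {1..card V}"
  proof
    fix k assume "k \<in> card ` {C. C \<subseteq> V \<and> C \<noteq> {}}"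
    then obtain C where C: "C \<subseteq> V" "C \<noteq> {}" "k = card C" by auto
    moreover have "finite C" using C(1) assms finite_subset by blast
    ultimately show "k \<in> {1..card V}" using assms by (auto simp: Suc_le_eq card_gt_0_iff card_mono)
  qed
  show "(\<Sum>k\<in>{1..card V}. sum f {C \<in> {C. C \<subseteq> V \<and> C \<noteq> {}}. card C = k}) =
      (\<Sum>k\<in>{1..card V}. \<Sum>C\<in>{C. C \<subseteq> V \<and> card C = k}. f C)"
    by (intro sum.cong refl arg_cong[where f = "sum f"]) auto
qed simp

section \<open>Finite products of a sigma-finite measure\<close>

lemma sigma_finite_measure_if_bounded_finite:
  fixes M :: "'a::metric_space measure"
  assumes M: "sets M = sets borel" and fin: "\<And>B. bounded B \<Longrightarrow> B \<in> sets borel \<Longrightarrow> emeasure M B < \<infinity>"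
  shows "sigma_finite_measure M"
proof
  obtain x0 :: 'a where True by simp
  define A where "A = range (\<lambda>n::nat. cball x0 (real n))"
  have "x \<in> \<Union> A" for x
  proof -
    have "x \<in> cball x0 (real (nat \<lceil>dist x0 x\<rceil>))"
      unfolding mem_cball by (rule real_nat_ceiling_ge)
    then show ?thesis unfolding A_def by blast
  qed
  then have "\<Union> A = space M" using sets_eq_imp_space_eq[OF M] by auto
  moreover have "A \<subseteq> sets M" unfolding A_def M by (auto simp: borel_closed)
  moreover have "\<forall>a\<in>A. emeasure M a \<noteq> \<infinity>"
    using fin[OF bounded_cball borel_closed[OF closed_cball]] by (auto simp: A_def less_top)
  moreover have "countable A" unfolding A_def by simp
  ultimately show "\<exists>A. countable A \<and> A \<subseteq> sets M \<and> \<Union> A = space M \<and> (\<forall>a\<in>A. emeasure M a \<noteq> \<infinity>)"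
    by blast
qed

lemma PiM_density:
  assumes M: "sigma_finite_measure M" and Mf: "sigma_finite_measure (density M f)"
    and f: "f \<in> borel_measurable M" and I: "finite I"
  shows "PiM I (\<lambda>_. density M f) = density (PiM I (\<lambda>_. M)) (\<lambda>x. \<Prod>i\<in>I. f (x i))"
proof -
  interpret F: product_sigma_finite "\<lambda>_. density M f" by (simp add: product_sigma_finite_def Mf)
  interpret L: product_sigma_finite "\<lambda>_. M" by (simp add: product_sigma_finite_def M)
  have fm: "(\<lambda>x. \<Prod>i\<in>I. f (x i)) \<in> borel_measurable (PiM I (\<lambda>_. M))"
    using f by (intro borel_measurable_prod_ennreal) (auto intro: measurable_compose[OF measurable_component_singleton])
  have "density (PiM I (\<lambda>_. M)) (\<lambda>x. \<Prod>i\<in>I. f (x i)) = PiM I (\<lambda>_. density M f)"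
  proof (rule F.PiM_eqI[OF I])
    show "sets (density (PiM I (\<lambda>_. M)) (\<lambda>x. \<Prod>i\<in>I. f (x i))) = sets (PiM I (\<lambda>_. density M f))"
      by (simp cong: sets_PiM_cong)
    fix A assume A: "\<And>i. i \<in> I \<Longrightarrow> A i \<in> sets (density M f)"
    then have Al: "A i \<in> sets M" if "i \<in> I" for i using that by simp
    have "emeasure (density (PiM I (\<lambda>_. M)) (\<lambda>x. \<Prod>i\<in>I. f (x i))) (PiE I A)
        = (\<integral>\<^sup>+x. (\<Prod>i\<in>I. f (x i)) * indicator (PiE I A) x \<partial>PiM I (\<lambda>_. M))"
      using Al by (intro emeasure_density[OF fm] sets_PiM_I_finite I)
    also have "\<dots> = (\<integral>\<^sup>+x. (\<Prod>i\<in>I. f (x i) * indicator (A i) (x i)) \<partial>PiM I (\<lambda>_. M))"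
    proof (rule nn_integral_cong)
      fix x assume x: "x \<in> space (PiM I (\<lambda>_. M))"
      have "indicator (PiE I A) x = (\<Prod>i\<in>I. indicator (A i) (x i) :: ennreal)"
        using x I by (auto simp: indicator_def space_PiM PiE_iff)
      then show "(\<Prod>i\<in>I. f (x i)) * indicator (PiE I A) x = (\<Prod>i\<in>I. f (x i) * indicator (A i) (x i))"
        by (simp add: prod.distrib)
    qed
    also have "\<dots> = (\<Prod>i\<in>I. \<integral>\<^sup>+w. f w * indicator (A i) w \<partial>M)"
      by (rule L.product_nn_integral_prod[OF I]) (use Al f in measurable)
    also have "\<dots> = (\<Prod>i\<in>I. emeasure (density M f) (A i))"
      by (intro prod.cong refl emeasure_density[symmetric] f Al)
    finally show "emeasure (density (PiM I (\<lambda>_. M)) (\<lambda>x. \<Prod>i\<in>I. f (x i))) (PiE I A) = (\<Prod>i\<in>I. emeasure (density M f) (A i))" .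
  qed
  then show ?thesis by simp
qed

lemma restrict_merge_sub:
  "I \<inter> J = {} \<Longrightarrow> S \<subseteq> J \<Longrightarrow> restrict (merge I J (x, y)) S = restrict y S"
  "I \<inter> J = {} \<Longrightarrow> S \<subseteq> I \<Longrightarrow> restrict (merge I J (x, y)) S = restrict x S"
  by (auto simp: restrict_def merge_def fun_eq_iff)

lemma vimage_restrict_reindex_PiE:
  assumes bij: "bij_betw g I J" and A: "\<And>i. i \<in> I \<Longrightarrow> A i \<subseteq> space N"
  shows "(\<lambda>x. \<lambda>i\<in>I. x (g i)) -` PiE I A \<inter> space (PiM J (\<lambda>_. N)) = PiE J (\<lambda>j. A (the_inv_into I g j))"
proof -
  let ?\<tau> = "the_inv_into I g"
  have t1: "?\<tau> j \<in> I" "g (?\<tau> j) = j" if "j \<in> J" for j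
    using that bij unfolding bij_betw_def by (auto intro: the_inv_into_into f_the_inv_into_f)
  have t2: "?\<tau> (g i) = i" "g i \<in> J" if "i \<in> I" for i
    using that bij unfolding bij_betw_def by (auto intro: the_inv_into_f_f)
  show ?thesis
  proof (intro set_eqI iffI)
    fix x assume x: "x \<in> (\<lambda>x. \<lambda>i\<in>I. x (g i)) -` PiE I A \<inter> space (PiM J (\<lambda>_. N))"
    have "x j \<in> A (?\<tau> j)" if j: "j \<in> J" for j
      using x t1[OF j] by (auto simp: PiE_iff)
    then show "x \<in> PiE J (\<lambda>j. A (?\<tau> j))" using x by (auto simp: PiE_iff space_PiM)
  next
    fix x assume x: "x \<in> PiE J (\<lambda>j. A (?\<tau> j))"
    have "x (g i) \<in> A i" if i: "i \<in> I" for i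
      using x t2[OF i] by (auto simp: PiE_iff)
    then show "x \<in> (\<lambda>x. \<lambda>i\<in>I. x (g i)) -` PiE I A \<inter> space (PiM J (\<lambda>_. N))"
      using x A t1 by (fastforce simp: PiE_iff space_PiM)
  qed
qed

lemma distr_PiM_reindex:
  assumes N: "sigma_finite_measure N" and bij: "bij_betw g I J" and finI: "finite I"
  shows "distr (PiM J (\<lambda>_. N)) (PiM I (\<lambda>_. N)) (\<lambda>x. \<lambda>i\<in>I. x (g i)) = PiM I (\<lambda>_. N)"
proof -
  interpret product_sigma_finite "\<lambda>_. N" by (simp add: product_sigma_finite_def N)
  let ?\<tau> = "the_inv_into I g"
  have finJ: "finite J" using bij finI bij_betw_finite by blast
  have t1: "?\<tau> j \<in> I" if "j \<in> J" for j
    using that bij unfolding bij_betw_def by (auto intro: the_inv_into_into)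
  have t2: "?\<tau> (g i) = i" "g i \<in> J" if "i \<in> I" for i
    using that bij unfolding bij_betw_def by (auto intro: the_inv_into_f_f)
  have meas: "(\<lambda>x. \<lambda>i\<in>I. x (g i)) \<in> measurable (PiM J (\<lambda>_. N)) (PiM I (\<lambda>_. N))"
    by (rule measurable_restrict) (auto intro: measurable_component_singleton t2)
  show ?thesis
  proof (rule PiM_eqI[OF finI])
    fix A assume A: "\<And>i. i \<in> I \<Longrightarrow> A i \<in> sets N"
    have "emeasure (distr (PiM J (\<lambda>_. N)) (PiM I (\<lambda>_. N)) (\<lambda>x. \<lambda>i\<in>I. x (g i))) (PiE I A)
        = emeasure (PiM J (\<lambda>_. N)) (PiE J (\<lambda>j. A (?\<tau> j)))"
      using A sets.sets_into_space[of _ N] vimage_restrict_reindex_PiE[OF bij, of A N]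
      by (subst emeasure_distr[OF meas]) (auto intro: sets_PiM_I_finite finI)
    also have "\<dots> = (\<Prod>j\<in>J. emeasure N (A (?\<tau> j)))"
      using A t1 by (subst emeasure_PiM[OF finJ]) auto
    also have "\<dots> = (\<Prod>i\<in>I. emeasure N (A i))"
      using prod.reindex_bij_betw[OF bij, of "\<lambda>j. emeasure N (A (?\<tau> j))"] t2 by simp
    finally show "emeasure (distr (PiM J (\<lambda>_. N)) (PiM I (\<lambda>_. N)) (\<lambda>x. \<lambda>i\<in>I. x (g i))) (PiE I A)
      = (\<Prod>i\<in>I. emeasure N (A i))" .
  qed simp
qed

lemma nn_integral_PiM_reindex:
  assumes N: "sigma_finite_measure N" and bij: "bij_betw g I J" and finI: "finite I" and f: "f \<in> borel_measurable (PiM I (\<lambda>_. N))"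
  shows "(\<integral>\<^sup>+x. f x \<partial>PiM I (\<lambda>_. N)) = (\<integral>\<^sup>+x. f (\<lambda>i\<in>I. x (g i)) \<partial>PiM J (\<lambda>_. N))"
proof -
  have t2: "g i \<in> J" if "i \<in> I" for i using that bij unfolding bij_betw_def by auto
  have meas: "(\<lambda>x. \<lambda>i\<in>I. x (g i)) \<in> measurable (PiM J (\<lambda>_. N)) (PiM I (\<lambda>_. N))"
    by (rule measurable_restrict) (auto intro: measurable_component_singleton t2)
  have "(\<integral>\<^sup>+x. f x \<partial>PiM I (\<lambda>_. N)) = (\<integral>\<^sup>+x. f x \<partial>distr (PiM J (\<lambda>_. N)) (PiM I (\<lambda>_. N)) (\<lambda>x. \<lambda>i\<in>I. x (g i)))"
    by (simp only: distr_PiM_reindex[OF N bij finI])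
  also have "\<dots> = (\<integral>\<^sup>+x. f (\<lambda>i\<in>I. x (g i)) \<partial>PiM J (\<lambda>_. N))"
    by (rule nn_integral_distr[OF meas]) (simp only: distr_PiM_reindex[OF N bij finI] f)
  finally show ?thesis .
qed


lemma (in product_sigma_finite) nn_integral_PiM_restrict_mult:
  assumes IJ: "I \<inter> J = {}" "finite I" "finite J"
    and f: "f \<in> borel_measurable (PiM I M)" and g: "g \<in> borel_measurable (PiM J M)"
  shows "(\<integral>\<^sup>+x. f (restrict x I) * g (restrict x J) \<partial>PiM (I \<union> J) M) = (\<integral>\<^sup>+x. f x \<partial>PiM I M) * (\<integral>\<^sup>+x. g x \<partial>PiM J M)"
proof -
  have "(\<lambda>x. f (restrict x I) * g (restrict x J)) \<in> borel_measurable (PiM (I \<union> J) M)"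
    using measurable_compose[OF measurable_restrict_subset f] measurable_compose[OF measurable_restrict_subset g]
    by (intro borel_measurable_times_ennreal) auto
  then have "(\<integral>\<^sup>+x. f (restrict x I) * g (restrict x J) \<partial>PiM (I \<union> J) M)
      = (\<integral>\<^sup>+x. \<integral>\<^sup>+y. f (restrict x I) * g (restrict y J) \<partial>PiM J M \<partial>PiM I M)"
    using product_nn_integral_fold[OF IJ] IJ(1) by (simp add: restrict_merge_sub)
  also have "\<dots> = (\<integral>\<^sup>+x. \<integral>\<^sup>+y. f x * g y \<partial>PiM J M \<partial>PiM I M)"
    by (intro nn_integral_cong) (simp add: space_PiM PiE_restrict)
  also have "\<dots> = (\<integral>\<^sup>+x. f x * (\<integral>\<^sup>+y. g y \<partial>PiM J M) \<partial>PiM I M)"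
    using g by (simp add: nn_integral_cmult)
  also have "\<dots> = (\<integral>\<^sup>+x. f x \<partial>PiM I M) * (\<integral>\<^sup>+x. g x \<partial>PiM J M)"
    by (rule nn_integral_multc[OF f])
  finally show ?thesis .
qed

lemma (in product_sigma_finite) nn_integral_PiM_prod_blocks:
  assumes "finite K" and "\<And>k. k \<in> K \<Longrightarrow> finite (Bk k)" and "disjoint_family_on Bk K"
    and "\<And>k. k \<in> K \<Longrightarrow> F k \<in> borel_measurable (PiM (Bk k) M)"
    and "\<And>k x. k \<in> K \<Longrightarrow> F k x = F k (restrict x (Bk k))"
  shows "(\<integral>\<^sup>+x. (\<Prod>k\<in>K. F k x) \<partial>PiM (\<Union>k\<in>K. Bk k) M) = (\<Prod>k\<in>K. \<integral>\<^sup>+x. F k x \<partial>PiM (Bk k) M)"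
  using assms
proof (induction K rule: finite_induct)
  case empty
  show ?case unfolding prod.empty image_empty Union_empty by (subst nn_integral_empty) auto
next
  case (insert k0 K)
  let ?R = "\<Union>k\<in>K. Bk k"
  have disj: "Bk k0 \<inter> ?R = {}" using insert.prems(2) insert.hyps(2)
    by (auto simp: disjoint_family_on_def)
  have Fm: "(\<lambda>x. F k x) \<in> borel_measurable (PiM L M)" if "k \<in> insert k0 K" "Bk k \<subseteq> L" for k L
  proof -
    have "(\<lambda>x. F k (restrict x (Bk k))) \<in> borel_measurable (PiM L M)"
      using measurable_compose[OF measurable_restrict_subset[OF that(2)] insert.prems(3)[OF that(1)]] .
    then show ?thesis using insert.prems(4)[OF that(1)] by simp
  qed
  have FR: "F k (restrict x ?R) = F k x" if "k \<in> K" for k x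
  proof -
    have "F k (restrict x ?R) = F k (restrict (restrict x ?R) (Bk k))"
      by (rule insert.prems(4)) (use that in simp)
    also have "restrict (restrict x ?R) (Bk k) = restrict x (Bk k)" using that by (auto simp: restrict_def)
    also have "F k (restrict x (Bk k)) = F k x" by (rule insert.prems(4)[symmetric]) (use that in simp)
    finally show ?thesis .
  qed
  have "F k0 (restrict x (Bk k0)) * (\<Prod>k\<in>K. F k (restrict x ?R)) = (\<Prod>k\<in>insert k0 K. F k x)" for x
  proof -
    have "F k0 (restrict x (Bk k0)) = F k0 x" by (rule insert.prems(4)[symmetric]) simp
    moreover have "(\<Prod>k\<in>K. F k (restrict x ?R)) = (\<Prod>k\<in>K. F k x)" using FR by (rule prod.cong[OF refl])
    ultimately show ?thesis by (simp only: prod.insert[OF insert.hyps])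
  qed
  then have "(\<integral>\<^sup>+x. (\<Prod>k\<in>insert k0 K. F k x) \<partial>PiM (\<Union>k\<in>insert k0 K. Bk k) M)
      = (\<integral>\<^sup>+x. F k0 (restrict x (Bk k0)) * (\<Prod>k\<in>K. F k (restrict x ?R)) \<partial>PiM (Bk k0 \<union> ?R) M)"
    by (simp only: UN_insert)
  also have "\<dots> = (\<integral>\<^sup>+x. F k0 x \<partial>PiM (Bk k0) M) * (\<integral>\<^sup>+y. (\<Prod>k\<in>K. F k y) \<partial>PiM ?R M)"
  proof (rule nn_integral_PiM_restrict_mult[OF disj])
    show "(\<lambda>y. \<Prod>k\<in>K. F k y) \<in> borel_measurable (PiM ?R M)"
      by (rule borel_measurable_prod_ennreal) (rule Fm, auto)
  qed (use insert.hyps(1) insert.prems(1,3) in auto)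
  also have "(\<integral>\<^sup>+y. (\<Prod>k\<in>K. F k y) \<partial>PiM ?R M) = (\<Prod>k\<in>K. \<integral>\<^sup>+x. F k x \<partial>PiM (Bk k) M)"
  proof (rule insert.IH)
    show "disjoint_family_on Bk K" using insert.prems(2) by (auto simp: disjoint_family_on_def)
    show "F k x = F k (restrict x (Bk k))" if "k \<in> K" for k x by (rule insert.prems(4)) (use that in simp)
  qed (use insert.prems(1,3) in auto)
  finally show ?case using insert.hyps(1,2) by simp
qed

section \<open>Tree integrals\<close>

definition abs_mayer :: "('a \<Rightarrow> 'a \<Rightarrow> ennreal) \<Rightarrow> 'a \<Rightarrow> 'a \<Rightarrow> ennreal" where
  "abs_mayer v a b = ennreal \<bar>mayer v a b\<bar>"
definition boltzmann :: "('a \<Rightarrow> 'a \<Rightarrow> ennreal) \<Rightarrow> 'a \<Rightarrow> 'a \<Rightarrow> ennreal" where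
  "boltzmann v a b = ennreal (1 + mayer v a b)"

lemma expneg_measurable[measurable]: "expneg \<in> borel_measurable borel"
  unfolding expneg_def by measurable

locale mayer_gas =
  fixes lam :: "'a :: polish_space measure"
    and v :: "'a \<Rightarrow> 'a \<Rightarrow> ennreal"
    and z :: "'a \<Rightarrow> real"
  assumes lam_borel: "sets lam = sets borel"
    and lam_fin: "\<And>B. bounded B \<Longrightarrow> B \<in> sets borel \<Longrightarrow> emeasure lam B < \<infinity>"
    and v_meas: "(\<lambda>p. v (fst p) (snd p)) \<in> borel_measurable (lam \<Otimes>\<^sub>M lam)"
    and v_sym: "\<And>x y. v x y = v y x"
    and z_meas: "z \<in> borel_measurable lam"
    and z_nonneg: "\<And>x. z x \<ge> 0"
begin

definition lam_z :: "'a measure" where "lam_z = density lam (\<lambda>y. ennreal (z y))"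

abbreviation vertex_weight :: "'a \<Rightarrow> nat set \<Rightarrow> (nat \<Rightarrow> 'a) \<Rightarrow> ennreal" where
  "vertex_weight \<equiv> star_weight (abs_mayer v) (boltzmann v)"

lemma sets_lam_z: "sets lam_z = sets borel"
  by (simp add: lam_z_def lam_borel)

lemma measurable_lam_iff: "measurable N lam = measurable N borel"
  by (rule measurable_cong_sets) (auto simp: lam_borel)

lemma measurable_lam_z_iff: "measurable N lam_z = measurable N borel"
  by (rule measurable_cong_sets) (auto simp: sets_lam_z)

lemma measurable_from_lam_z: "measurable lam_z N = measurable borel N"
  by (rule measurable_cong_sets) (auto simp: sets_lam_z)

lemma measurable_from_lam: "measurable lam N = measurable borel N"
  by (rule measurable_cong_sets) (auto simp: lam_borel)

lemma sigma_finite_lam: "sigma_finite_measure lam"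
  by (rule sigma_finite_measure_if_bounded_finite[OF lam_borel lam_fin])

lemma sigma_finite_lam_z: "sigma_finite_measure lam_z"
proof -
  interpret sigma_finite_measure lam by (rule sigma_finite_lam)
  have "(\<lambda>y. ennreal (z y)) \<in> borel_measurable lam" using z_meas by measurable
  then show ?thesis unfolding lam_z_def by (subst sigma_finite_iff_density_finite') auto
qed

lemma product_sigma_finite_lam_z: "product_sigma_finite (\<lambda>_. lam_z)"
  unfolding product_sigma_finite_def using sigma_finite_lam_z by simp

lemma measurable_component_lam:
  "k \<in> V \<Longrightarrow> (\<lambda>x. x k) \<in> measurable (PiM V (\<lambda>_. lam)) borel"
  using measurable_component_singleton[of k V "\<lambda>_. lam"] by (simp add: measurable_lam_iff)

lemma measurable_component_lam_z:
  "k \<in> V \<Longrightarrow> (\<lambda>x. x k) \<in> measurable (PiM V (\<lambda>_. lam_z)) borel"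
  using measurable_component_singleton[of k V "\<lambda>_. lam_z"] by (simp add: measurable_lam_z_iff)

lemma v_measurable:
  assumes "f \<in> measurable N borel" "g \<in> measurable N borel"
  shows "(\<lambda>\<omega>. v (f \<omega>) (g \<omega>)) \<in> borel_measurable N"
proof -
  have "(\<lambda>\<omega>. (f \<omega>, g \<omega>)) \<in> measurable N (lam \<Otimes>\<^sub>M lam)"
    using assms by (intro measurable_Pair) (auto simp: measurable_lam_iff)
  from measurable_compose[OF this v_meas] show ?thesis by simp
qed

lemma mayer_measurable:
  assumes "f \<in> measurable N borel" "g \<in> measurable N borel"
  shows "(\<lambda>\<omega>. mayer v (f \<omega>) (g \<omega>)) \<in> borel_measurable N"
  unfolding mayer_def using v_measurable[OF assms] by measurable

lemma abs_mayer_measurable[measurable (raw)]: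
  assumes "f \<in> measurable N borel" "g \<in> measurable N borel"
  shows "(\<lambda>\<omega>. abs_mayer v (f \<omega>) (g \<omega>)) \<in> borel_measurable N"
  unfolding abs_mayer_def using mayer_measurable[OF assms] by measurable

lemma boltzmann_measurable[measurable (raw)]:
  assumes "f \<in> measurable N borel" "g \<in> measurable N borel"
  shows "(\<lambda>\<omega>. boltzmann v (f \<omega>) (g \<omega>)) \<in> borel_measurable N"
  unfolding boltzmann_def using mayer_measurable[OF assms] by measurable

lemma boltzmann_sym: "boltzmann v a b = boltzmann v b a"
  by (simp add: boltzmann_def mayer_def v_sym)

lemma star_weight_measurable:
  assumes S: "finite S" and X: "\<And>k. k \<in> S \<Longrightarrow> (\<lambda>\<omega>. X \<omega> k) \<in> measurable N borel"
    and Y: "Y \<in> measurable N borel"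
  shows "(\<lambda>\<omega>. vertex_weight (Y \<omega>) S (X \<omega>)) \<in> borel_measurable N"
proof -
  have "(\<lambda>\<omega>. \<Prod>i\<in>S. abs_mayer v (Y \<omega>) (X \<omega> i)) \<in> borel_measurable N"
    by (rule borel_measurable_prod_ennreal) (auto intro!: abs_mayer_measurable Y X)
  moreover have "(\<lambda>\<omega>. \<Prod>q\<in>incr_pairs S. boltzmann v (X \<omega> (fst q)) (X \<omega> (snd q))) \<in> borel_measurable N"
    by (rule borel_measurable_prod_ennreal) (auto intro!: boltzmann_measurable X simp: incr_pairs_def)
  ultimately show ?thesis unfolding star_weight_def by measurable
qed

lemma vertex_weight_measurable:
  "finite S \<Longrightarrow> S \<subseteq> I \<Longrightarrow> (\<lambda>x. vertex_weight y S x) \<in> borel_measurable (PiM I (\<lambda>_. lam_z))"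
  by (rule star_weight_measurable) (auto intro: measurable_component_lam_z)

lemma pmap_weight_measurable:
  assumes V: "finite V" and X: "\<And>k. k \<in> insert r V \<Longrightarrow> (\<lambda>\<omega>. X \<omega> k) \<in> measurable N borel"
  shows "(\<lambda>\<omega>. pmap_weight (abs_mayer v) (boltzmann v) r V p (X \<omega>)) \<in> borel_measurable N"
  unfolding pmap_weight_def
proof (rule borel_measurable_prod_ennreal)
  fix k assume k: "k \<in> insert r V"
  have "fibre V p k \<subseteq> V" by (auto simp: fibre_def)
  then show "(\<lambda>\<omega>. vertex_weight (X \<omega> k) (fibre V p k) (X \<omega>)) \<in> borel_measurable N"
    using V X k by (intro star_weight_measurable) (auto intro: finite_subset)
qed


definition tree_sum :: "nat \<Rightarrow> nat set \<Rightarrow> (nat \<Rightarrow> 'a) \<Rightarrow> ennreal" where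
  "tree_sum r V x = (\<Sum>p\<in>parent_maps r V. pmap_weight (abs_mayer v) (boltzmann v) r V p x)"

definition tree_integral :: "nat \<Rightarrow> nat set \<Rightarrow> 'a \<Rightarrow> ennreal" where
  "tree_integral r V y = (\<integral>\<^sup>+x. tree_sum r V (x(r := y)) \<partial>PiM V (\<lambda>_. lam_z))"

lemma tree_sum_measurable:
  assumes V: "finite V" and X: "\<And>k. k \<in> insert r V \<Longrightarrow> (\<lambda>\<omega>. X \<omega> k) \<in> measurable N borel"
  shows "(\<lambda>\<omega>. tree_sum r V (X \<omega>)) \<in> borel_measurable N"
  unfolding tree_sum_def by (rule borel_measurable_sum) (rule pmap_weight_measurable[OF V X])

lemma tree_sum_upd_measurable:
  assumes V: "finite V" and rV: "r \<notin> V"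
  shows "(\<lambda>x. tree_sum r V (x(r := y))) \<in> borel_measurable (PiM V (\<lambda>_. lam_z))"
proof (rule tree_sum_measurable[OF V])
  fix k assume k: "k \<in> insert r V"
  show "(\<lambda>x. (x(r := y)) k) \<in> measurable (PiM V (\<lambda>_. lam_z)) borel"
  proof (cases "k = r")
    case False
    with k have "k \<in> V" by auto
    then show ?thesis using False measurable_component_lam_z by simp
  qed simp
qed

lemma tree_integral_measurable:
  assumes V: "finite V" and rV: "r \<notin> V"
  shows "(\<lambda>y. tree_integral r V y) \<in> borel_measurable borel"
proof -
  interpret product_sigma_finite "\<lambda>_. lam_z" by (rule product_sigma_finite_lam_z)
  interpret S: sigma_finite_measure "PiM V (\<lambda>_. lam_z)" by (rule sigma_finite[OF V])
  have "(\<lambda>\<omega>. tree_sum r V ((snd \<omega>)(r := fst \<omega>))) \<in> borel_measurable (lam_z \<Otimes>\<^sub>M PiM V (\<lambda>_. lam_z))"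
  proof (rule tree_sum_measurable[OF V])
    fix k assume k: "k \<in> insert r V"
    show "(\<lambda>\<omega>. ((snd \<omega>)(r := fst \<omega>)) k) \<in> measurable (lam_z \<Otimes>\<^sub>M PiM V (\<lambda>_. lam_z)) borel"
    proof (cases "k = r")
      case True
      then show ?thesis using measurable_fst[of lam_z "PiM V (\<lambda>_. lam_z)"] by (simp add: measurable_lam_z_iff)
    next
      case False
      then have "k \<in> V" using k by auto
      then show ?thesis using False measurable_compose[OF measurable_snd measurable_component_lam_z[of k V]]
        by simp
    qed
  qed
  then have "(\<lambda>y. tree_integral r V y) \<in> borel_measurable lam_z"
    unfolding tree_integral_def by (intro S.borel_measurable_nn_integral) (simp add: case_prod_beta)
  then show ?thesis by (simp add: measurable_from_lam_z)
qed

lemma tree_integral_empty: "tree_integral r {} y = 1"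
proof -
  interpret product_sigma_finite "\<lambda>_. lam_z" by (rule product_sigma_finite_lam_z)
  show ?thesis unfolding tree_integral_def tree_sum_def parent_maps_empty pmap_weight_empty
    by (subst nn_integral_empty) auto
qed

lemma tree_sum_cong:
  assumes "\<And>i. i \<in> insert r V \<Longrightarrow> x i = x' i"
  shows "tree_sum r V x = tree_sum r V x'"
  unfolding tree_sum_def by (rule sum.cong[OF refl], rule pmap_weight_cong) (use assms in auto)

lemma tree_integral_relabel:
  assumes R: "pmap_relabelling h g r r' V V'" and V: "finite V"
  shows "tree_integral r' V' y = tree_integral r V y"
proof -
  interpret R: pmap_relabelling h g r r' V V' by fact
  have bij: "bij_betw h V V'"
    using R.h_inj R.hV by (auto simp: bij_betw_def intro: inj_on_subset)
  have "tree_sum r' V' (x(r' := y)) = tree_sum r V ((\<lambda>i\<in>V. x (h i))(r := y))" for x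
  proof -
    have "tree_sum r' V' (x(r' := y)) = tree_sum r V (x(r' := y) \<circ> h)"
      unfolding tree_sum_def by (rule sum_pmap_weight_relabel[OF R boltzmann_sym])
    also have "\<dots> = tree_sum r V ((\<lambda>i\<in>V. x (h i))(r := y))"
    proof (rule tree_sum_cong)
      fix i assume "i \<in> insert r V"
      moreover have "h i \<noteq> r'" if "i \<in> V" using that R.hV R.rV' by auto
      ultimately show "(x(r' := y) \<circ> h) i = ((\<lambda>i\<in>V. x (h i))(r := y)) i" using R.hr by auto
    qed
    finally show ?thesis .
  qed
  then show ?thesis
    unfolding tree_integral_def
    by (simp add: nn_integral_PiM_reindex[OF sigma_finite_lam_z bij V tree_sum_upd_measurable[OF V R.rV]])
qed

lemma tree_sum_upd_branchings:
  assumes rV: "r \<notin> V" and V: "finite V" and Vne: "V \<noteq> {}"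
  shows "tree_sum r V (x(r := y)) = (\<Sum>C\<in>{C. C \<subseteq> V \<and> C \<noteq> {}}. \<Sum>\<pi>\<in>(V - C) \<rightarrow>\<^sub>E C.
      vertex_weight y C x * (\<Prod>c\<in>C. tree_sum c (fibre (V - C) \<pi> c) x))"
proof -
  have "tree_sum r V (x(r := y)) = (\<Sum>C\<in>{C. C \<subseteq> V \<and> C \<noteq> {}}. \<Sum>\<pi>\<in>(V - C) \<rightarrow>\<^sub>E C.
      vertex_weight y C (x(r := y)) * (\<Prod>c\<in>C. tree_sum c (fibre (V - C) \<pi> c) (x(r := y))))"
    unfolding tree_sum_def by (subst sum_pmap_weight_branchings[OF rV V Vne]) simp
  also have "\<dots> = (\<Sum>C\<in>{C. C \<subseteq> V \<and> C \<noteq> {}}. \<Sum>\<pi>\<in>(V - C) \<rightarrow>\<^sub>E C.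
      vertex_weight y C x * (\<Prod>c\<in>C. tree_sum c (fibre (V - C) \<pi> c) x))"
  proof (intro sum.cong refl arg_cong2[where f = "(*)"] prod.cong star_weight_cong tree_sum_cong)
    fix C \<pi> c i assume "C \<in> {C. C \<subseteq> V \<and> C \<noteq> {}}"
    then show "i \<in> C \<Longrightarrow> (x(r := y)) i = x i" "i \<in> insert c (fibre (V - C) \<pi> c) \<Longrightarrow> c \<in> C \<Longrightarrow> (x(r := y)) i = x i"
      using rV by (auto simp: fibre_def)
  qed
  finally show ?thesis .
qed

lemma branching_term_measurable:
  assumes V: "finite V" and C: "C \<subseteq> V"
  shows "(\<lambda>x. vertex_weight y C x * (\<Prod>c\<in>C. tree_sum c (fibre (V - C) \<pi> c) x)) \<in> borel_measurable (PiM V (\<lambda>_. lam_z))"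
proof -
  have "(\<lambda>x. vertex_weight y C x) \<in> borel_measurable (PiM V (\<lambda>_. lam_z))"
    by (rule star_weight_measurable) (use C V in \<open>auto intro: finite_subset measurable_component_lam_z\<close>)
  moreover have "(\<lambda>x. tree_sum c (fibre (V - C) \<pi> c) x) \<in> borel_measurable (PiM V (\<lambda>_. lam_z))" if "c \<in> C" for c
    using V C that by (intro tree_sum_measurable) (auto intro!: measurable_component_lam_z simp: fibre_def)
  ultimately show ?thesis by (intro borel_measurable_times_ennreal borel_measurable_prod_ennreal)
qed

lemma nn_integral_prod_tree_sums:
  assumes C: "finite C" and D: "finite D" "C \<inter> D = {}" and \<pi>: "\<pi> \<in> D \<rightarrow>\<^sub>E C"
  shows "(\<integral>\<^sup>+y'. (\<Prod>c\<in>C. tree_sum c (fibre D \<pi> c) (merge C D (x, y'))) \<partial>PiM D (\<lambda>_. lam_z))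
    = (\<Prod>c\<in>C. tree_integral c (fibre D \<pi> c) (x c))"
proof -
  interpret product_sigma_finite "\<lambda>_. lam_z" by (rule product_sigma_finite_lam_z)
  define F where "F = (\<lambda>c y'. tree_sum c (fibre D \<pi> c) (y'(c := x c)))"
  have finB: "finite (fibre D \<pi> c)" for c using D by (auto simp: fibre_def)
  have cB: "c \<notin> fibre D \<pi> c" if "c \<in> C" for c using that D by (auto simp: fibre_def)
  have Fm: "F c \<in> borel_measurable (PiM (fibre D \<pi> c) (\<lambda>_. lam_z))" if "c \<in> C" for c
    unfolding F_def by (rule tree_sum_upd_measurable[OF finB cB[OF that]])
  have Fr: "F c y' = F c (restrict y' (fibre D \<pi> c))" if "c \<in> C" for c y'
    unfolding F_def by (rule tree_sum_cong) (use cB[OF that] in auto)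
  have "tree_sum c (fibre D \<pi> c) (merge C D (x, y')) = F c y'" if "c \<in> C" for c y'
    unfolding F_def by (rule tree_sum_cong) (use that D in \<open>auto simp: merge_def fibre_def\<close>)
  then have "(\<integral>\<^sup>+y'. (\<Prod>c\<in>C. tree_sum c (fibre D \<pi> c) (merge C D (x, y'))) \<partial>PiM D (\<lambda>_. lam_z))
      = (\<integral>\<^sup>+y'. (\<Prod>c\<in>C. F c y') \<partial>PiM (\<Union>c\<in>C. fibre D \<pi> c) (\<lambda>_. lam_z))"
    using \<pi> by (intro nn_integral_cong prod.cong arg_cong2[where f = "\<lambda>I. nn_integral (PiM I (\<lambda>_. lam_z))"])
      (auto simp: fibre_def)
  also have "\<dots> = (\<Prod>c\<in>C. \<integral>\<^sup>+y'. F c y' \<partial>PiM (fibre D \<pi> c) (\<lambda>_. lam_z))"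
    by (rule nn_integral_PiM_prod_blocks[OF C finB _ Fm Fr]) (auto simp: disjoint_family_on_def fibre_def)
  finally show ?thesis unfolding tree_integral_def F_def .
qed

lemma nn_integral_branching_term:
  assumes V: "finite V" and C: "C \<subseteq> V" and \<pi>: "\<pi> \<in> (V - C) \<rightarrow>\<^sub>E C"
  shows "(\<integral>\<^sup>+x. vertex_weight y C x * (\<Prod>c\<in>C. tree_sum c (fibre (V - C) \<pi> c) x) \<partial>PiM V (\<lambda>_. lam_z))
    = (\<integral>\<^sup>+x. vertex_weight y C x * (\<Prod>c\<in>C. tree_integral c (fibre (V - C) \<pi> c) (x c)) \<partial>PiM C (\<lambda>_. lam_z))"
proof -
  interpret product_sigma_finite "\<lambda>_. lam_z" by (rule product_sigma_finite_lam_z)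
  let ?D = "V - C"
  have finC: "finite C" using C V finite_subset by blast
  have "(\<integral>\<^sup>+x. vertex_weight y C x * (\<Prod>c\<in>C. tree_sum c (fibre ?D \<pi> c) x) \<partial>PiM V (\<lambda>_. lam_z))
    = (\<integral>\<^sup>+x. (\<integral>\<^sup>+y'. vertex_weight y C (merge C ?D (x, y')) * (\<Prod>c\<in>C. tree_sum c (fibre ?D \<pi> c) (merge C ?D (x, y')))
        \<partial>PiM ?D (\<lambda>_. lam_z)) \<partial>PiM C (\<lambda>_. lam_z))"
    using product_nn_integral_fold[OF _ finC, of ?D] branching_term_measurable[OF V C] V C
    by (simp add: Un_absorb1)
  also have "\<dots> = (\<integral>\<^sup>+x. vertex_weight y C x * (\<Prod>c\<in>C. tree_integral c (fibre ?D \<pi> c) (x c)) \<partial>PiM C (\<lambda>_. lam_z))"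
  proof (rule nn_integral_cong)
    fix x
    have "vertex_weight y C (merge C ?D (x, y')) = vertex_weight y C x" for y'
      by (rule star_weight_cong) (simp add: merge_def)
    moreover have "(\<lambda>y'. merge C ?D (x, y') k) \<in> measurable (PiM ?D (\<lambda>_. lam_z)) borel" if "k \<in> V" for k
      using that measurable_component_lam_z[of k ?D] by (cases "k \<in> C") (auto simp: merge_def)
    then have "(\<lambda>y'. \<Prod>c\<in>C. tree_sum c (fibre ?D \<pi> c) (merge C ?D (x, y'))) \<in> borel_measurable (PiM ?D (\<lambda>_. lam_z))"
      using V C by (intro borel_measurable_prod_ennreal tree_sum_measurable) (auto simp: fibre_def)
    ultimately have "(\<integral>\<^sup>+y'. vertex_weight y C (merge C ?D (x, y')) * (\<Prod>c\<in>C. tree_sum c (fibre ?D \<pi> c) (merge C ?D (x, y')))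
        \<partial>PiM ?D (\<lambda>_. lam_z))
      = vertex_weight y C x * (\<integral>\<^sup>+y'. (\<Prod>c\<in>C. tree_sum c (fibre ?D \<pi> c) (merge C ?D (x, y'))) \<partial>PiM ?D (\<lambda>_. lam_z))"
      by (simp add: nn_integral_cmult)
    also have "\<dots> = vertex_weight y C x * (\<Prod>c\<in>C. tree_integral c (fibre ?D \<pi> c) (x c))"
      using nn_integral_prod_tree_sums[OF finC _ _ \<pi>] V by simp
    finally show "(\<integral>\<^sup>+y'. vertex_weight y C (merge C ?D (x, y')) * (\<Prod>c\<in>C. tree_sum c (fibre ?D \<pi> c) (merge C ?D (x, y')))
        \<partial>PiM ?D (\<lambda>_. lam_z)) = vertex_weight y C x * (\<Prod>c\<in>C. tree_integral c (fibre ?D \<pi> c) (x c))" .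
  qed
  finally show ?thesis .
qed

lemma tree_integral_branchings:
  assumes rV: "r \<notin> V" and V: "finite V" and Vne: "V \<noteq> {}"
  shows "tree_integral r V y = (\<Sum>C\<in>{C. C \<subseteq> V \<and> C \<noteq> {}}. \<Sum>\<pi>\<in>(V - C) \<rightarrow>\<^sub>E C.
      \<integral>\<^sup>+x. vertex_weight y C x * (\<Prod>c\<in>C. tree_integral c (fibre (V - C) \<pi> c) (x c)) \<partial>PiM C (\<lambda>_. lam_z))"
proof -
  have finCs: "finite {C. C \<subseteq> V \<and> C \<noteq> {}}" using V by (auto intro: finite_subset[of _ "Pow V"])
  have finPi: "finite ((V - C) \<rightarrow>\<^sub>E C)" if "C \<subseteq> V" for C
    using V that by (intro finite_PiE) (auto intro: finite_subset)
  have "tree_integral r V y = (\<integral>\<^sup>+x. (\<Sum>C\<in>{C. C \<subseteq> V \<and> C \<noteq> {}}. \<Sum>\<pi>\<in>(V - C) \<rightarrow>\<^sub>E C.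
      vertex_weight y C x * (\<Prod>c\<in>C. tree_sum c (fibre (V - C) \<pi> c) x)) \<partial>PiM V (\<lambda>_. lam_z))"
    unfolding tree_integral_def tree_sum_upd_branchings[OF rV V Vne] ..
  also have "\<dots> = (\<Sum>C\<in>{C. C \<subseteq> V \<and> C \<noteq> {}}. \<integral>\<^sup>+x. (\<Sum>\<pi>\<in>(V - C) \<rightarrow>\<^sub>E C.
      vertex_weight y C x * (\<Prod>c\<in>C. tree_sum c (fibre (V - C) \<pi> c) x)) \<partial>PiM V (\<lambda>_. lam_z))"
    by (rule nn_integral_sum) (use V in \<open>auto intro!: borel_measurable_sum branching_term_measurable\<close>)
  also have "\<dots> = (\<Sum>C\<in>{C. C \<subseteq> V \<and> C \<noteq> {}}. \<Sum>\<pi>\<in>(V - C) \<rightarrow>\<^sub>E C.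
      \<integral>\<^sup>+x. vertex_weight y C x * (\<Prod>c\<in>C. tree_sum c (fibre (V - C) \<pi> c) x) \<partial>PiM V (\<lambda>_. lam_z))"
    by (intro sum.cong refl nn_integral_sum) (use V in \<open>auto intro!: branching_term_measurable\<close>)
  also have "\<dots> = (\<Sum>C\<in>{C. C \<subseteq> V \<and> C \<noteq> {}}. \<Sum>\<pi>\<in>(V - C) \<rightarrow>\<^sub>E C.
      \<integral>\<^sup>+x. vertex_weight y C x * (\<Prod>c\<in>C. tree_integral c (fibre (V - C) \<pi> c) (x c)) \<partial>PiM C (\<lambda>_. lam_z))"
    using V by (intro sum.cong refl nn_integral_branching_term) auto
  finally show ?thesis .
qed

lemma tree_integral_canonical:
  assumes B: "finite B" and c: "c \<notin> B"
  shows "tree_integral c B y = tree_integral 0 {1..card B} y"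
proof -
  obtain e where "bij_betw e {1..card B} B" using ex_bij_betw_nat_finite_1[OF B] by blast
  then have "pmap_relabelling (\<lambda>j. if j = c then 0 else the_inv_into {1..card B} e j)
      (\<lambda>i. if i = 0 then c else e i) c 0 B {1..card B}"
    by (rule pmap_relabelling_bij_betw) (use c in auto)
  then show ?thesis using tree_integral_relabel B by metis
qed

definition children_integral :: "'a \<Rightarrow> nat \<Rightarrow> (nat \<Rightarrow> 'a \<Rightarrow> ennreal) \<Rightarrow> ennreal" where
  "children_integral y k g = (\<integral>\<^sup>+x. vertex_weight y {1..k} x * (\<Prod>j\<in>{1..k}. g j (x j)) \<partial>PiM {1..k} (\<lambda>_. lam_z))"

lemma children_integrand_measurable:
  assumes "\<And>j. j \<in> {1..k} \<Longrightarrow> g j \<in> borel_measurable borel"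
  shows "(\<lambda>x. vertex_weight y {1..k} x * (\<Prod>j\<in>{1..k}. g j (x j))) \<in> borel_measurable (PiM {1..k} (\<lambda>_. lam_z))"
proof -
  have "(\<lambda>x. g j (x j)) \<in> borel_measurable (PiM {1..k} (\<lambda>_. lam_z))" if "j \<in> {1..k}" for j
    using measurable_compose[OF measurable_component_lam_z[OF that] assms[OF that]] .
  then show ?thesis
    by (intro borel_measurable_times_ennreal borel_measurable_prod_ennreal vertex_weight_measurable) auto
qed

lemma star_integral_bij_betw:
  assumes bh: "bij_betw h {1..k} C" and H: "\<And>c. c \<in> C \<Longrightarrow> H c \<in> borel_measurable borel"
  shows "(\<integral>\<^sup>+x. vertex_weight y C x * (\<Prod>c\<in>C. H c (x c)) \<partial>PiM C (\<lambda>_. lam_z)) = children_integral y k (\<lambda>j. H (h j))"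
proof -
  define g where "g = the_inv_into {1..k} h"
  have bg: "bij_betw g C {1..k}" unfolding g_def by (rule bij_betw_the_inv_into[OF bh])
  have finC: "finite C" using bh bij_betw_finite by blast
  have inj: "inj_on h {1..k}" and img: "h ` {1..k} = C" using bh by (auto simp: bij_betw_def)
  have gh: "g (h j) = j" if "j \<in> {1..k}" for j unfolding g_def using inj that by (rule the_inv_into_f_f)
  have fm: "(\<lambda>x. vertex_weight y C x * (\<Prod>c\<in>C. H c (x c))) \<in> borel_measurable (PiM C (\<lambda>_. lam_z))"
    using finC H measurable_compose[OF measurable_component_lam_z H]
    by (intro borel_measurable_times_ennreal borel_measurable_prod_ennreal vertex_weight_measurable) auto
  have "(\<integral>\<^sup>+x. vertex_weight y C x * (\<Prod>c\<in>C. H c (x c)) \<partial>PiM C (\<lambda>_. lam_z))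
      = (\<integral>\<^sup>+x. vertex_weight y C (\<lambda>c\<in>C. x (g c)) * (\<Prod>c\<in>C. H c ((\<lambda>c\<in>C. x (g c)) c)) \<partial>PiM {1..k} (\<lambda>_. lam_z))"
    by (rule nn_integral_PiM_reindex[OF sigma_finite_lam_z bg finC fm])
  also have "\<dots> = children_integral y k (\<lambda>j. H (h j))"
    unfolding children_integral_def
  proof (rule nn_integral_cong)
    fix x
    have "vertex_weight y C (\<lambda>c\<in>C. x (g c)) = vertex_weight y {1..k} ((\<lambda>c\<in>C. x (g c)) \<circ> h)"
      unfolding img[symmetric] by (rule star_weight_image[OF inj boltzmann_sym])
    also have "\<dots> = vertex_weight y {1..k} x"
      by (rule star_weight_cong) (use img gh in auto)
    moreover have "(\<Prod>c\<in>C. H c ((\<lambda>c\<in>C. x (g c)) c)) = (\<Prod>j\<in>{1..k}. H (h j) ((\<lambda>c\<in>C. x (g c)) (h j)))"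
      unfolding img[symmetric] by (rule prod.reindex[OF inj, unfolded comp_def])
    moreover have "\<dots> = (\<Prod>j\<in>{1..k}. H (h j) (x j))"
      by (rule prod.cong[OF refl]) (use img gh in auto)
    ultimately show "vertex_weight y C (\<lambda>c\<in>C. x (g c)) * (\<Prod>c\<in>C. H c ((\<lambda>c\<in>C. x (g c)) c)) =
        vertex_weight y {1..k} x * (\<Prod>j\<in>{1..k}. H (h j) (x j))" by simp
  qed
  finally show ?thesis .
qed

text \<open>Averaging over the \<open>k!\<close> enumerations of the children of the root is what produces the
  factor \<open>1/k!\<close> of the recursion.\<close>

lemma star_integral_enumerations:
  assumes finC: "finite C" and H: "\<And>c. c \<in> C \<Longrightarrow> H c \<in> borel_measurable borel"
  shows "(\<integral>\<^sup>+x. vertex_weight y C x * (\<Prod>c\<in>C. H c (x c)) \<partial>PiM C (\<lambda>_. lam_z))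
    = ennreal (1 / fact (card C)) * (\<Sum>h\<in>enumerations (card C) C. children_integral y (card C) (\<lambda>j. H (h j)))"
proof (rule eq_inverse_fact_mult_ennreal)
  have "(\<Sum>h\<in>enumerations (card C) C. children_integral y (card C) (\<lambda>j. H (h j)))
      = (\<Sum>h\<in>enumerations (card C) C. \<integral>\<^sup>+x. vertex_weight y C x * (\<Prod>c\<in>C. H c (x c)) \<partial>PiM C (\<lambda>_. lam_z))"
    using star_integral_bij_betw[OF enumerations_bij_betw[OF _ finC refl] H] by simp
  then show "of_nat (fact (card C)) * (\<integral>\<^sup>+x. vertex_weight y C x * (\<Prod>c\<in>C. H c (x c)) \<partial>PiM C (\<lambda>_. lam_z))
      = (\<Sum>h\<in>enumerations (card C) C. children_integral y (card C) (\<lambda>j. H (h j)))"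
    using card_enumerations[OF finC refl] by simp
qed

definition tree_term :: "nat \<Rightarrow> 'a \<Rightarrow> ennreal" where "tree_term n y = tree_integral 0 {1..n} y"

lemma tree_term_measurable: "tree_term n \<in> borel_measurable borel"
  unfolding tree_term_def by (rule tree_integral_measurable) auto

lemma tree_term_0: "tree_term 0 y = 1"
  by (simp add: tree_term_def tree_integral_empty)

lemma tree_integral_branchings_enumerated:
  assumes n: "n \<ge> 1"
  shows "tree_term n y = (\<Sum>C\<in>{C. C \<subseteq> {1..n} \<and> C \<noteq> {}}. \<Sum>\<pi>\<in>({1..n} - C) \<rightarrow>\<^sub>E C.
      ennreal (1 / fact (card C)) *
      (\<Sum>h\<in>enumerations (card C) C. children_integral y (card C) (\<lambda>j. tree_term (card (fibre ({1..n} - C) \<pi> (h j))))))"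
proof -
  have "tree_term n y = (\<Sum>C\<in>{C. C \<subseteq> {1..n} \<and> C \<noteq> {}}. \<Sum>\<pi>\<in>({1..n} - C) \<rightarrow>\<^sub>E C.
      \<integral>\<^sup>+x. vertex_weight y C x * (\<Prod>c\<in>C. tree_integral c (fibre ({1..n} - C) \<pi> c) (x c)) \<partial>PiM C (\<lambda>_. lam_z))"
    unfolding tree_term_def by (rule tree_integral_branchings) (use n in auto)
  also have "\<dots> = (\<Sum>C\<in>{C. C \<subseteq> {1..n} \<and> C \<noteq> {}}. \<Sum>\<pi>\<in>({1..n} - C) \<rightarrow>\<^sub>E C.
      ennreal (1 / fact (card C)) *
      (\<Sum>h\<in>enumerations (card C) C. children_integral y (card C) (\<lambda>j. tree_term (card (fibre ({1..n} - C) \<pi> (h j))))))"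
  proof (intro sum.cong refl)
    fix C :: "nat set" and \<pi> :: "nat \<Rightarrow> nat"
    assume C: "C \<in> {C. C \<subseteq> {1..n} \<and> C \<noteq> {}}"
    have "(\<integral>\<^sup>+x. vertex_weight y C x * (\<Prod>c\<in>C. tree_integral c (fibre ({1..n} - C) \<pi> c) (x c)) \<partial>PiM C (\<lambda>_. lam_z))
        = (\<integral>\<^sup>+x. vertex_weight y C x * (\<Prod>c\<in>C. tree_term (card (fibre ({1..n} - C) \<pi> c)) (x c)) \<partial>PiM C (\<lambda>_. lam_z))"
      unfolding tree_term_def
      by (intro nn_integral_cong arg_cong2[where f = "(*)"] refl prod.cong tree_integral_canonical)
        (auto simp: fibre_def)
    also have "\<dots> = ennreal (1 / fact (card C)) *
        (\<Sum>h\<in>enumerations (card C) C. children_integral y (card C) (\<lambda>j. tree_term (card (fibre ({1..n} - C) \<pi> (h j)))))"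
      using C finite_subset by (intro star_integral_enumerations tree_term_measurable) auto
    finally show "(\<integral>\<^sup>+x. vertex_weight y C x * (\<Prod>c\<in>C. tree_integral c (fibre ({1..n} - C) \<pi> c) (x c)) \<partial>PiM C (\<lambda>_. lam_z))
        = ennreal (1 / fact (card C)) *
        (\<Sum>h\<in>enumerations (card C) C. children_integral y (card C) (\<lambda>j. tree_term (card (fibre ({1..n} - C) \<pi> (h j)))))" .
  qed
  finally show ?thesis .
qed

lemma integral_split_sum_tree_term:
  "(\<integral>\<^sup>+x. vertex_weight y {1..k} x * split_sum (\<lambda>j m. tree_term m (x j)) n k \<partial>PiM {1..k} (\<lambda>_. lam_z))
    = (\<Sum>C\<in>{C. C \<subseteq> {1..n} \<and> card C = k}. \<Sum>h\<in>enumerations k C. \<Sum>\<pi>\<in>({1..n} - C) \<rightarrow>\<^sub>E C.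
        children_integral y k (\<lambda>j. tree_term (card (fibre ({1..n} - C) \<pi> (h j)))))"
proof -
  let ?F = "\<lambda>C h \<pi> x. vertex_weight y {1..k} x * (\<Prod>j\<in>{1..k}. tree_term (card (fibre ({1..n} - C) \<pi> (h j))) (x j))"
  have Fm: "(\<lambda>x. ?F C h \<pi> x) \<in> borel_measurable (PiM {1..k} (\<lambda>_. lam_z))" for C h \<pi>
    by (intro children_integrand_measurable tree_term_measurable)
  have "(\<integral>\<^sup>+x. vertex_weight y {1..k} x * split_sum (\<lambda>j m. tree_term m (x j)) n k \<partial>PiM {1..k} (\<lambda>_. lam_z))
    = (\<integral>\<^sup>+x. (\<Sum>C\<in>{C. C \<subseteq> {1..n} \<and> card C = k}. \<Sum>h\<in>enumerations k C. \<Sum>\<pi>\<in>({1..n} - C) \<rightarrow>\<^sub>E C. ?F C h \<pi> x)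
      \<partial>PiM {1..k} (\<lambda>_. lam_z))"
    unfolding split_sum_def by (simp add: sum_distrib_left)
  also have "\<dots> = (\<Sum>C\<in>{C. C \<subseteq> {1..n} \<and> card C = k}. \<integral>\<^sup>+x. (\<Sum>h\<in>enumerations k C. \<Sum>\<pi>\<in>({1..n} - C) \<rightarrow>\<^sub>E C. ?F C h \<pi> x)
      \<partial>PiM {1..k} (\<lambda>_. lam_z))"
    by (rule nn_integral_sum) (intro borel_measurable_sum Fm)
  also have "\<dots> = (\<Sum>C\<in>{C. C \<subseteq> {1..n} \<and> card C = k}. \<Sum>h\<in>enumerations k C. \<integral>\<^sup>+x. (\<Sum>\<pi>\<in>({1..n} - C) \<rightarrow>\<^sub>E C. ?F C h \<pi> x)
      \<partial>PiM {1..k} (\<lambda>_. lam_z))"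
    by (intro sum.cong refl nn_integral_sum borel_measurable_sum Fm)
  also have "\<dots> = (\<Sum>C\<in>{C. C \<subseteq> {1..n} \<and> card C = k}. \<Sum>h\<in>enumerations k C. \<Sum>\<pi>\<in>({1..n} - C) \<rightarrow>\<^sub>E C.
      \<integral>\<^sup>+x. ?F C h \<pi> x \<partial>PiM {1..k} (\<lambda>_. lam_z))"
    by (intro sum.cong refl nn_integral_sum Fm)
  finally show ?thesis unfolding children_integral_def .
qed

lemma tree_term_recursion:
  assumes n: "n \<ge> 1"
  shows "tree_term n y = (\<Sum>k\<in>{1..n}. ennreal (1 / fact k) *
     (\<integral>\<^sup>+x. vertex_weight y {1..k} x * split_sum (\<lambda>j m. tree_term m (x j)) n k \<partial>PiM {1..k} (\<lambda>_. lam_z)))"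
proof -
  let ?f = "\<lambda>C \<pi> h. children_integral y (card C) (\<lambda>j. tree_term (card (fibre ({1..n} - C) \<pi> (h j))))"
  let ?t = "\<lambda>C. \<Sum>\<pi>\<in>({1..n} - C) \<rightarrow>\<^sub>E C. ennreal (1 / fact (card C)) * (\<Sum>h\<in>enumerations (card C) C. ?f C \<pi> h)"
  have t: "?t C = ennreal (1 / fact k) * (\<Sum>h\<in>enumerations k C. \<Sum>\<pi>\<in>({1..n} - C) \<rightarrow>\<^sub>E C. ?f C \<pi> h)"
    if "card C = k" for C k
    unfolding that sum_distrib_left[symmetric] by (rule arg_cong[where f = "(*) _"], rule sum.swap)
  have "tree_term n y = (\<Sum>C\<in>{C. C \<subseteq> {1..n} \<and> C \<noteq> {}}. ?t C)"
    by (rule tree_integral_branchings_enumerated[OF n])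
  also have "\<dots> = (\<Sum>k\<in>{1..n}. \<Sum>C\<in>{C. C \<subseteq> {1..n} \<and> card C = k}. ?t C)"
    using sum_nonempty_subsets_by_card[of "{1..n}" ?t] by simp
  also have "\<dots> = (\<Sum>k\<in>{1..n}. \<Sum>C\<in>{C. C \<subseteq> {1..n} \<and> card C = k}.
      ennreal (1 / fact k) * (\<Sum>h\<in>enumerations k C. \<Sum>\<pi>\<in>({1..n} - C) \<rightarrow>\<^sub>E C. ?f C \<pi> h))"
    by (intro sum.cong refl t) simp
  also have "\<dots> = (\<Sum>k\<in>{1..n}. ennreal (1 / fact k) *
     (\<integral>\<^sup>+x. vertex_weight y {1..k} x * split_sum (\<lambda>j m. tree_term m (x j)) n k \<partial>PiM {1..k} (\<lambda>_. lam_z)))"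
    unfolding integral_split_sum_tree_term sum_distrib_left by (intro sum.cong refl) simp
  finally show ?thesis .
qed

section \<open>The tree generating function as least supersolution\<close>

definition tree_gf :: "'a \<Rightarrow> ennreal" where
  "tree_gf y = (\<Sum>n. ennreal (1 / fact n) * tree_term n y)"

definition tree_gf_upto :: "nat \<Rightarrow> 'a \<Rightarrow> ennreal" where
  "tree_gf_upto N y = (\<Sum>n<N. ennreal (1 / fact n) * tree_term n y)"

definition branch_op :: "('a \<Rightarrow> ennreal) \<Rightarrow> 'a \<Rightarrow> ennreal" where
  "branch_op G y = (\<Sum>m. ennreal (1 / fact (Suc m)) * children_integral y (Suc m) (\<lambda>_. G))"

lemma branch_op_mono:
  assumes "\<And>w. G w \<le> G' w"
  shows "branch_op G y \<le> branch_op G' y"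
  unfolding branch_op_def children_integral_def
  by (intro suminf_le mult_left_mono nn_integral_mono prod_mono_ennreal) (auto intro: assms)

definition split_integral :: "nat \<Rightarrow> nat \<Rightarrow> 'a \<Rightarrow> ennreal" where
  "split_integral n m y = (\<integral>\<^sup>+x. vertex_weight y {1..Suc m} x * split_sum (\<lambda>j l. tree_term l (x j)) n (Suc m)
    \<partial>PiM {1..Suc m} (\<lambda>_. lam_z))"

lemma split_integrand_measurable:
  "(\<lambda>x. vertex_weight y {1..k} x * split_sum (\<lambda>j l. tree_term l (x j)) n k) \<in> borel_measurable (PiM {1..k} (\<lambda>_. lam_z))"
proof -
  have "(\<lambda>x. tree_term l (x j)) \<in> borel_measurable (PiM {1..k} (\<lambda>_. lam_z))" if "j \<in> {1..k}" for j l
    by (rule measurable_compose[OF measurable_component_lam_z[OF that] tree_term_measurable])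
  then show ?thesis unfolding split_sum_def
    by (intro borel_measurable_times_ennreal vertex_weight_measurable borel_measurable_sum borel_measurable_prod_ennreal) auto
qed

lemma tree_term_series:
  "tree_term n y = (if n = 0 then 1 else 0) + (\<Sum>m. ennreal (1 / fact (Suc m)) * split_integral n m y)"
proof (cases "n = 0")
  case True
  then show ?thesis by (simp add: tree_term_0 split_integral_def split_sum_eq_0)
next
  case False
  let ?t = "\<lambda>k. ennreal (1 / fact k) *
    (\<integral>\<^sup>+x. vertex_weight y {1..k} x * split_sum (\<lambda>j m. tree_term m (x j)) n k \<partial>PiM {1..k} (\<lambda>_. lam_z))"
  have "tree_term n y = (\<Sum>k\<in>{1..n}. ?t k)" using tree_term_recursion[of n y] False by simp
  also have "\<dots> = (\<Sum>m<n. ?t (Suc m))"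
  proof -
    have "{1..n} = Suc ` {..<n}" by (simp add: image_Suc_lessThan)
    then show ?thesis by (simp add: sum.reindex)
  qed
  also have "\<dots> = (\<Sum>m. ?t (Suc m))"
    by (rule suminf_finite[symmetric]) (auto simp: split_sum_eq_0)
  finally show ?thesis using False by (simp add: split_integral_def)
qed

text \<open>Stated for arbitrary coefficients \<open>c\<close> so that it covers both \<open>tree_gf\<close> and its truncations.\<close>

lemma suminf_tree_term_expansion:
  fixes c :: "nat \<Rightarrow> ennreal"
  shows "(\<Sum>n. c n * tree_term n y) = c 0 + (\<Sum>m. ennreal (1 / fact (Suc m)) *
    (\<integral>\<^sup>+x. vertex_weight y {1..Suc m} x * (\<Sum>n. c n * split_sum (\<lambda>j l. tree_term l (x j)) n (Suc m))
      \<partial>PiM {1..Suc m} (\<lambda>_. lam_z)))"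
proof -
  have "(\<Sum>n. c n * tree_term n y) = (\<Sum>n. c n * (if n = 0 then 1 else 0)) +
      (\<Sum>n. c n * (\<Sum>m. ennreal (1 / fact (Suc m)) * split_integral n m y))"
    by (subst tree_term_series) (simp add: distrib_left suminf_add)
  also have "(\<Sum>n. c n * (if n = 0 then 1 else 0)) = c 0"
    by (subst suminf_finite[of "{0}"]) auto
  also have "(\<Sum>n. c n * (\<Sum>m. ennreal (1 / fact (Suc m)) * split_integral n m y))
      = (\<Sum>m. ennreal (1 / fact (Suc m)) * (\<Sum>n. c n * split_integral n m y))"
  proof -
    have "(\<Sum>n. c n * (\<Sum>m. ennreal (1 / fact (Suc m)) * split_integral n m y))
        = (\<Sum>n. \<Sum>m. ennreal (1 / fact (Suc m)) * (c n * split_integral n m y))"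
      by (simp add: ennreal_suminf_cmult[symmetric] mult.left_commute del: ennreal_suminf_cmult)
    also have "\<dots> = (\<Sum>m. \<Sum>n. ennreal (1 / fact (Suc m)) * (c n * split_integral n m y))"
      by (rule suminf_swap_ennreal)
    finally show ?thesis by simp
  qed
  also have "(\<lambda>m. \<Sum>n. c n * split_integral n m y) = (\<lambda>m. \<integral>\<^sup>+x. vertex_weight y {1..Suc m} x *
      (\<Sum>n. c n * split_sum (\<lambda>j l. tree_term l (x j)) n (Suc m)) \<partial>PiM {1..Suc m} (\<lambda>_. lam_z))"
  proof
    fix m
    have "(\<Sum>n. c n * split_integral n m y) = (\<integral>\<^sup>+x. (\<Sum>n. c n * (vertex_weight y {1..Suc m} x *
        split_sum (\<lambda>j l. tree_term l (x j)) n (Suc m))) \<partial>PiM {1..Suc m} (\<lambda>_. lam_z))"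
      unfolding split_integral_def nn_integral_cmult[OF split_integrand_measurable, symmetric]
      by (rule nn_integral_suminf[symmetric])
        (intro borel_measurable_times_ennreal borel_measurable_const split_integrand_measurable)
    then show "(\<Sum>n. c n * split_integral n m y) = (\<integral>\<^sup>+x. vertex_weight y {1..Suc m} x *
        (\<Sum>n. c n * split_sum (\<lambda>j l. tree_term l (x j)) n (Suc m)) \<partial>PiM {1..Suc m} (\<lambda>_. lam_z))"
      by (simp add: ennreal_suminf_cmult[symmetric] mult.left_commute del: ennreal_suminf_cmult)
  qed
  finally show ?thesis .
qed

lemma tree_gf_fixpoint: "tree_gf y = 1 + branch_op tree_gf y"
proof -
  have "(\<Sum>n. ennreal (1 / fact n) * split_sum (\<lambda>j l. tree_term l (x j)) n k) = (\<Prod>j\<in>{1..k}. tree_gf (x j))" for x k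
    unfolding tree_gf_def by (rule egf_split_sum)
  then show ?thesis
    unfolding tree_gf_def[of y] suminf_tree_term_expansion branch_op_def children_integral_def by simp
qed

lemma tree_gf_upto_Suc_le: "tree_gf_upto (Suc N) y \<le> 1 + branch_op (tree_gf_upto N) y"
proof -
  let ?c = "\<lambda>n. if n < Suc N then ennreal (1 / fact n) else 0"
  have trunc: "(\<Sum>n. ?c n * s n) = (\<Sum>n<Suc N. ennreal (1 / fact n) * s n)" for s :: "nat \<Rightarrow> ennreal"
    by (subst suminf_finite[of "{..<Suc N}"]) auto
  have "tree_gf_upto (Suc N) y = 1 + (\<Sum>m. ennreal (1 / fact (Suc m)) * (\<integral>\<^sup>+x. vertex_weight y {1..Suc m} x *
      (\<Sum>n<Suc N. ennreal (1 / fact n) * split_sum (\<lambda>j l. tree_term l (x j)) n (Suc m)) \<partial>PiM {1..Suc m} (\<lambda>_. lam_z)))"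
    using suminf_tree_term_expansion[of ?c y] unfolding trunc tree_gf_upto_def by simp
  also have "\<dots> \<le> 1 + branch_op (tree_gf_upto N) y"
    unfolding branch_op_def children_integral_def tree_gf_upto_def
    by (intro add_left_mono suminf_le mult_left_mono nn_integral_mono sum_split_sum_lessThan_le summableI) simp_all
  finally show ?thesis .
qed

lemma tree_gf_le_supersolution:
  assumes super: "\<And>w. 1 + branch_op G w \<le> G w"
  shows "tree_gf y \<le> G y"
proof -
  have "tree_gf_upto N w \<le> G w" for N w
  proof (induction N arbitrary: w)
    case 0
    then show ?case by (simp add: tree_gf_upto_def)
  next
    case (Suc N)
    have "tree_gf_upto (Suc N) w \<le> 1 + branch_op (tree_gf_upto N) w" by (rule tree_gf_upto_Suc_le)
    also have "\<dots> \<le> 1 + branch_op G w" by (intro add_left_mono branch_op_mono Suc.IH)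
    finally show ?case using super order_trans by blast
  qed
  then show ?thesis
    unfolding tree_gf_def suminf_eq_SUP tree_gf_upto_def[symmetric] by (rule SUP_least)
qed

lemma tree_gf_measurable: "tree_gf \<in> borel_measurable borel"
  unfolding tree_gf_def[abs_def]
  by (intro borel_measurable_suminf_order borel_measurable_times_ennreal borel_measurable_const tree_term_measurable)

lemma tree_gf_ge_1: "tree_gf y \<ge> 1"
  using tree_gf_fixpoint[of y] by simp

lemma PiM_lam_z_density:
  "finite I \<Longrightarrow> PiM I (\<lambda>_. lam_z) = density (PiM I (\<lambda>_. lam)) (\<lambda>x. \<Prod>i\<in>I. ennreal (z (x i)))"
  unfolding lam_z_def using z_meas
  by (intro PiM_density sigma_finite_lam sigma_finite_lam_z[unfolded lam_z_def]) auto

lemma cond_sum_eq_branch_op: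
  assumes a: "a \<in> borel_measurable lam"
  shows "cond_sum lam v z a x0 = branch_op (\<lambda>w. ennreal (exp (a w))) x0"
  unfolding cond_sum_def branch_op_def children_integral_def Let_def
proof (intro suminf_cong arg_cong[where f = "(*) _"])
  fix m
  let ?I = "{1..Suc m}"
  have am: "(\<lambda>w. ennreal (exp (a w))) \<in> borel_measurable borel" using a by (simp add: measurable_from_lam)
  have fm: "(\<lambda>x. vertex_weight x0 ?I x * (\<Prod>j\<in>?I. ennreal (exp (a (x j))))) \<in> borel_measurable (PiM ?I (\<lambda>_. lam))"
    by (intro borel_measurable_times_ennreal star_weight_measurable borel_measurable_prod_ennreal
        measurable_compose[OF measurable_component_lam am] measurable_component_lam) auto
  have zm: "(\<lambda>x. \<Prod>i\<in>?I. ennreal (z (x i))) \<in> borel_measurable (PiM ?I (\<lambda>_. lam))"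
    using z_meas by (intro borel_measurable_prod_ennreal) (auto intro: measurable_compose[OF measurable_component_lam])
  have "(\<integral>\<^sup>+x. vertex_weight x0 ?I x * (\<Prod>j\<in>?I. ennreal (exp (a (x j)))) \<partial>PiM ?I (\<lambda>_. lam_z))
      = (\<integral>\<^sup>+x. (\<Prod>i\<in>?I. ennreal (z (x i))) * (vertex_weight x0 ?I x * (\<Prod>j\<in>?I. ennreal (exp (a (x j)))))
        \<partial>PiM ?I (\<lambda>_. lam))"
    unfolding PiM_lam_z_density[OF finite_atLeastAtMost] by (rule nn_integral_density[OF zm fm])
  also have "\<dots> = (\<integral>\<^sup>+y. (\<Prod>j\<in>?I. ennreal \<bar>mayer v x0 (y j)\<bar>) *
      (\<Prod>p\<in>{(i, j). i \<in> ?I \<and> j \<in> ?I \<and> i < j}. ennreal (1 + mayer v (y (fst p)) (y (snd p)))) *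
      (\<Prod>j\<in>?I. ennreal (z (y j) * exp (a (y j)))) \<partial>PiM ?I (\<lambda>_. lam))"
    by (intro nn_integral_cong)
      (simp add: star_weight_def abs_mayer_def boltzmann_def incr_pairs_def ennreal_mult z_nonneg prod.distrib ac_simps)
  finally show "(\<integral>\<^sup>+y. (\<Prod>j\<in>?I. ennreal \<bar>mayer v x0 (y j)\<bar>) *
      (\<Prod>p\<in>{(i, j). i \<in> ?I \<and> j \<in> ?I \<and> i < j}. ennreal (1 + mayer v (y (fst p)) (y (snd p)))) *
      (\<Prod>j\<in>?I. ennreal (z (y j) * exp (a (y j)))) \<partial>PiM ?I (\<lambda>_. lam))
    = (\<integral>\<^sup>+x. vertex_weight x0 ?I x * (\<Prod>j\<in>?I. ennreal (exp (a (x j)))) \<partial>PiM ?I (\<lambda>_. lam_z))" by simp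
qed

lemma Ttilde_eq_tree_gf: "Ttilde lam v z q = tree_gf q"
proof -
  have "abs_mayer v = (\<lambda>a b. ennreal \<bar>mayer v a b\<bar>)" "boltzmann v = (\<lambda>a b. ennreal (1 + mayer v a b))"
    by (auto simp: abs_mayer_def boltzmann_def fun_eq_iff)
  then have tree_term_eq: "tree_term n q = (\<integral>\<^sup>+ x. (\<Sum>T\<in>trees n. tree_weight v n T (x(0 := q)))
      \<partial>(PiM {1..n} (\<lambda>_. density lam (\<lambda>y. ennreal (z y)))))" for n
    unfolding tree_term_def tree_integral_def tree_sum_def sum_trees_eq_sum_parent_maps lam_z_def by simp
  have "tree_gf q = (\<Sum>m. ennreal (1 / fact (m + 1)) * tree_term (m + 1) q) + (\<Sum>n<1. ennreal (1 / fact n) * tree_term n q)"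
    unfolding tree_gf_def by (rule suminf_offset) simp
  then show ?thesis unfolding Ttilde_def Let_def tree_term_eq[symmetric] by (simp add: tree_term_0 add.commute)
qed

lemma condition_if_tree_gf_finite:
  assumes fin: "\<And>q. tree_gf q < \<infinity>"
  defines "a \<equiv> \<lambda>y. ln (enn2real (tree_gf y))"
  shows "a \<in> borel_measurable lam" "a x \<ge> 0" "cond_sum lam v z a x0 \<le> ennreal (exp (a x0) - 1)"
proof -
  have ge1: "enn2real (tree_gf y) \<ge> 1" for y
    using enn2real_mono[OF tree_gf_ge_1 fin[unfolded infinity_ennreal_def]] by simp
  have exp_a: "ennreal (exp (a y)) = tree_gf y" for y
  proof -
    have "exp (a y) = enn2real (tree_gf y)" using ge1[of y] by (simp add: a_def)
    then show ?thesis using fin[of y] by (simp add: ennreal_enn2real_if)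
  qed
  show am: "a \<in> borel_measurable lam"
    unfolding a_def measurable_from_lam using tree_gf_measurable by measurable
  show "a x \<ge> 0" using ge1[of x] by (simp add: a_def)
  have "cond_sum lam v z a x0 = branch_op tree_gf x0"
    using cond_sum_eq_branch_op[OF am] exp_a by (simp add: fun_eq_iff)
  also have "\<dots> = ennreal (exp (a x0)) - ennreal 1"
    using tree_gf_fixpoint[of x0] exp_a[of x0] by simp
  also have "\<dots> = ennreal (exp (a x0) - 1)"
    by (rule ennreal_minus) simp
  finally show "cond_sum lam v z a x0 \<le> ennreal (exp (a x0) - 1)" by simp
qed

lemma tree_gf_le_exp_if_condition:
  assumes am: "a \<in> borel_measurable lam" and a0: "\<And>x. a x \<ge> 0"
    and cond: "\<And>x0. cond_sum lam v z a x0 \<le> ennreal (exp (a x0) - 1)"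
  shows "tree_gf q \<le> ennreal (exp (a q))"
proof (rule tree_gf_le_supersolution)
  fix w
  have "1 + branch_op (\<lambda>w. ennreal (exp (a w))) w \<le> 1 + ennreal (exp (a w) - 1)"
    using cond[of w] cond_sum_eq_branch_op[OF am] by (simp add: add_left_mono)
  also have "\<dots> = ennreal (1 + (exp (a w) - 1))"
    using a0[of w] by (subst ennreal_plus) auto
  also have "\<dots> = ennreal (exp (a w))" by simp
  finally show "1 + branch_op (\<lambda>w. ennreal (exp (a w))) w \<le> ennreal (exp (a w))" .
qed

end

theorem mainTheorem9:
  fixes lam :: "'a :: polish_space measure"
    and v :: "'a \<Rightarrow> 'a \<Rightarrow> ennreal"
    and z :: "'a \<Rightarrow> real"
  assumes lam_borel: "sets lam = sets borel"
    and lam_fin: "\<And>B. bounded B \<Longrightarrow> B \<in> sets borel \<Longrightarrow> emeasure lam B < \<infinity>"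
    and v_meas: "(\<lambda>p. v (fst p) (snd p)) \<in> borel_measurable (lam \<Otimes>\<^sub>M lam)"
    and v_sym: "\<And>x y. v x y = v y x"
    and z_meas: "z \<in> borel_measurable lam"
    and z_nonneg: "\<And>x. z x \<ge> 0"
  shows "(\<forall>q. Ttilde lam v z q < \<infinity>) \<longleftrightarrow>
         (\<exists>a :: 'a \<Rightarrow> real. a \<in> borel_measurable lam \<and> (\<forall>x. a x \<ge> 0) \<and>
            (\<forall>x0. cond_sum lam v z a x0 \<le> ennreal (exp (a x0) - 1)))"
proof -
  interpret mayer_gas lam v z
    using lam_borel lam_fin v_meas v_sym z_meas z_nonneg by unfold_locales auto
  show ?thesis
  proof
    assume "\<forall>q. Ttilde lam v z q < \<infinity>"
    then have "tree_gf q < \<infinity>" for q by (simp add: Ttilde_eq_tree_gf)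
    then show "\<exists>a. a \<in> borel_measurable lam \<and> (\<forall>x. a x \<ge> 0) \<and>
        (\<forall>x0. cond_sum lam v z a x0 \<le> ennreal (exp (a x0) - 1))"
      using condition_if_tree_gf_finite by blast
  next
    assume "\<exists>a. a \<in> borel_measurable lam \<and> (\<forall>x. a x \<ge> 0) \<and>
        (\<forall>x0. cond_sum lam v z a x0 \<le> ennreal (exp (a x0) - 1))"
    then obtain a where "a \<in> borel_measurable lam" "\<And>x. a x \<ge> 0"
      "\<And>x0. cond_sum lam v z a x0 \<le> ennreal (exp (a x0) - 1)" by blast
    then have "tree_gf q \<le> ennreal (exp (a q))" for q by (rule tree_gf_le_exp_if_condition)
    then show "\<forall>q. Ttilde lam v z q < \<infinity>"
      using le_less_trans[OF _ ennreal_less_top] by (simp add: Ttilde_eq_tree_gf) blast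
  qed
qed

end
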